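(* Fix $N>0$, $\lambda=(\lambda_1,\lambda_2)\in\mathbb{C}^2$ and $\tilde\lambda\in\mathbb{C}^2$, and put $p\cdot x:=\lambda_1[u\,\tilde\lambda]+\lambda_2[\hat u\,\tilde\lambda]$ and $$Q:=\frac{(p\cdot x)^2}{4}+N\lambda_1\lambda_2\frac{[u\,\tilde\lambda][\hat u\,\tilde\lambda]}{\|u\|^2}.$$ Let $C(Q)=\sum_{n\ge0}(-Q)^n/(2n)!$ and $S(Q)=\sum_{n\ge0}(-Q)^n/(2n+1)!$ (so $C=\cos\sqrt Q$, $S=\sin\sqrt Q/\sqrt Q$, entire in $Q$), and define $$\phi=e^{\frac{i}{2}p\cdot x}\Big(C(Q)+\frac{i\,p\cdot x}{2}\,S(Q)\Big).$$ Then: (i) $\Delta\phi=0$ on $\mathbb{C}^2\setminus\{0\}$; (ii) $\phi=\sum_{k,l\ge0}\frac{(i\lambda_1)^k(i\lambda_2)^l}{k!\,l!}\phi_{k,l}$, and equivalently $\phi=\sum_{j\ge0}\frac{1}{(2j)!}\big(-N\lambda_1\lambda_2\frac{[u\tilde\lambda][\hat u\tilde\lambda]}{\|u\|^2}\big)^j{}_1F_1(j+1;2j+1;\,i\,p\cdot x)$; (iii) at $N=0$, $\phi=e^{ip\cdot x}$; (iv) writing $u=t\zeta$ with $\zeta\in\mathbb{C}^2\setminus\{0\}$, $t\in\mathbb{C}^\times$, the limit $t\to0$ exists and equals $C\big(N\lambda_1\lambda_2[\zeta\,\tilde\lambda][\hat\zeta\,\tilde\lambda]/\|\zeta\|^2\big)$,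 so $\phi$ extends continuously to the blow-up of $\mathbb{C}^2$ at the origin; (v) $\phi$ is invariant under $(\lambda,\tilde\lambda)\mapsto(s\lambda,s^{-1}\tilde\lambda)$, $s\in\mathbb{C}^\times$.
   Context: Fix $N>0$. On $\mathbb{C}^2\setminus\{0\}$ with coordinates $u=(u^{\dot1},u^{\dot2})$ write $\|u\|^2=|u^{\dot1}|^2+|u^{\dot2}|^2$ and $\hat u=(-\bar u^{\dot2},\bar u^{\dot1})$. The Burns metric is $g_N=2(|du^{\dot1}|^2+|du^{\dot2}|^2)+2N|u^{\dot2}du^{\dot1}-u^{\dot1}du^{\dot2}|^2/\|u\|^4$; its Laplace–Beltrami operator is explicitly $$\Delta=\frac{2}{1+N/\|u\|^2}\Big(\sum_{a}\frac{\partial^2}{\partial u^{a}\partial\bar u^{a}}+\frac{N}{\|u\|^4}\Big(\sum_a u^a\frac{\partial}{\partial u^a}\Big)\Big(\sum_b\bar u^b\frac{\partial}{\partial\bar u^b}\Big)\Big).$$ For $\tilde\lambda\in\mathbb{C}^2$, $[u\,\tilde\lambda]:=u^{\dot1}\tilde\lambda_{\dot1}+u^{\dot2}\tilde\lambda_{\dot2}$ and $[\hat u\,\tilde\lambda]:=-\bar u^{\dot2}\tilde\lambda_{\dot1}+\bar u^{\dot1}\tilde\lambda_{\dot2}$. The functions $\phi_{k,l}$ are $\phi_{k,l}=\frac{k!\,l!}{(k+l)!}\sum_{j=0}^{\min(k,l)}\frac{(k+l-j)!}{j!(k-j)!(l-j)!}(N/\|u\|^2)^j[u\,\tilde\lambda]^k[\hat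 u\,\tilde\lambda]^l$. ${}_1F_1$ is the confluent hypergeometric function. *)

theory Defs
  imports "HOL-Analysis.Analysis"
begin

definition normsq :: "complex \<times> complex \<Rightarrow> real" where
  "normsq u = (cmod (fst u))^2 + (cmod (snd u))^2"

definition dirD :: "(complex \<times> complex \<Rightarrow> complex) \<Rightarrow> complex \<times> complex \<Rightarrow> complex \<times> complex \<Rightarrow> complex" where
  "dirD f u v = vector_derivative (\<lambda>t::real. f (u + t *\<^sub>R v)) (at 0)"

text \<open>Coordinate index a \<in> {1,2}.\<close>
definition ev :: "nat \<Rightarrow> complex \<times> complex" where
  "ev a = (if a = 1 then (1, 0) else (0, 1))"

definition cu :: "nat \<Rightarrow> complex \<times> complex \<Rightarrow> complex" where
  "cu a u = (if a = 1 then fst u else snd u)"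

definition dz :: "nat \<Rightarrow> (complex \<times> complex \<Rightarrow> complex) \<Rightarrow> complex \<times> complex \<Rightarrow> complex" where
  "dz a f u = (dirD f u (ev a) - \<i> * dirD f u (\<i> * fst (ev a), \<i> * snd (ev a))) / 2"

definition dzb :: "nat \<Rightarrow> (complex \<times> complex \<Rightarrow> complex) \<Rightarrow> complex \<times> complex \<Rightarrow> complex" where
  "dzb a f u = (dirD f u (ev a) + \<i> * dirD f u (\<i> * fst (ev a), \<i> * snd (ev a))) / 2"

text \<open>Laplace--Beltrami operator of the Burns metric g_N.\<close>
definition burns_laplacian :: "real \<Rightarrow> (complex \<times> complex \<Rightarrow> complex) \<Rightarrow> complex \<times> complex \<Rightarrow> complex" where
  "burns_laplacian N f u =
     of_real (2 / (1 + N / normsq u)) *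
     ((\<Sum>a\<in>{1,2}. dz a (dzb a f) u)
      + of_real (N / (normsq u)^2) *
        (\<Sum>a\<in>{1,2}. cu a u * dz a (\<lambda>w. \<Sum>b\<in>{1,2}. cnj (cu b w) * dzb b f w) u))"

definition br :: "complex \<times> complex \<Rightarrow> complex \<times> complex \<Rightarrow> complex" where
  "br u lt = fst u * fst lt + snd u * snd lt"

definition uhat :: "complex \<times> complex \<Rightarrow> complex \<times> complex" where
  "uhat u = (- cnj (snd u), cnj (fst u))"

definition brh :: "complex \<times> complex \<Rightarrow> complex \<times> complex \<Rightarrow> complex" where
  "brh u lt = br (uhat u) lt"

definition pdx :: "complex \<times> complex \<Rightarrow> complex \<times> complex \<Rightarrow> complex \<times> complex \<Rightarrow> complex" where
  "pdx l lt u = fst l * br u lt + snd l * brh u lt"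

definition Qf :: "real \<Rightarrow> complex \<times> complex \<Rightarrow> complex \<times> complex \<Rightarrow> complex \<times> complex \<Rightarrow> complex" where
  "Qf N l lt u = (pdx l lt u)^2 / 4
      + of_real N * fst l * snd l * br u lt * brh u lt / of_real (normsq u)"

definition Cser :: "complex \<Rightarrow> complex" where
  "Cser Q = (\<Sum>n. (- Q)^n / fact (2 * n))"

definition Sser :: "complex \<Rightarrow> complex" where
  "Sser Q = (\<Sum>n. (- Q)^n / fact (2 * n + 1))"

definition phi :: "real \<Rightarrow> complex \<times> complex \<Rightarrow> complex \<times> complex \<Rightarrow> complex \<times> complex \<Rightarrow> complex" where
  "phi N l lt u = exp (\<i> / 2 * pdx l lt u) *
      (Cser (Qf N l lt u) + \<i> * pdx l lt u / 2 * Sser (Qf N l lt u))"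

definition phikl :: "real \<Rightarrow> complex \<times> complex \<Rightarrow> nat \<Rightarrow> nat \<Rightarrow> complex \<times> complex \<Rightarrow> complex" where
  "phikl N lt k l u = fact k * fact l / fact (k + l) *
     (\<Sum>j=0..min k l. fact (k + l - j) / (fact j * fact (k - j) * fact (l - j))
        * (of_real (N / normsq u))^j * (br u lt)^k * (brh u lt)^l)"

definition hyp1F1 :: "complex \<Rightarrow> complex \<Rightarrow> complex \<Rightarrow> complex" where
  "hyp1F1 a b z = (\<Sum>n. pochhammer a n / pochhammer b n * z^n / fact n)"

end

theory Submission
  imports Defs
begin

text \<open>Write Q = P^2/4 + M, where P = p.x and M = N l1 l2 [u lt][uhat lt] / |u|^2 is the cross term.
  Then phi = Phi (P, M) for the entire function Phi (P, M) = e^(iP/2) (C Q + iP/2 S Q), and the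
  relations 2 Q S' = C - S and 2 Q S'' = - S/2 - 3 S' make Phi a solution of
  Phi_PP - P Phi_PM - 2 Phi_M - M Phi_MM = 0.  Since P is the sum of a holomorphic and an
  antiholomorphic linear function of u and M is homogeneous of degree 0 in u and in conj u, the chain
  rule turns the Burns Laplacian of Phi (P, M) into a multiple of this equation, which gives (i).

  The roots m1, m2 = iP/2 \<plusminus> i sqrt Q of m^2 - iP m + M give
  Phi = (m1 e^m1 - m2 e^m2) / (m1 - m2) = \<Sum>k h_k(m1, m2) / k!, with h_k the complete homogeneous
  polynomial.  Writing h_k in terms of m1 + m2 = iP and m1 m2 = M and splitting
  iP = i l1 [u lt] + i l2 [uhat lt] expands Phi into an absolutely convergent triple series; its two
  regroupings are the expansions (ii), and at N = 0 it reduces to the exponential series (iii).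
  Finally M is invariant under u \<mapsto> t u while P \<rightarrow> 0 as t \<rightarrow> 0, so
  phi (t \<zeta>) \<rightarrow> Phi (0, M \<zeta>) = C (M \<zeta>) (iv), and P and M are invariant under
  (l, lt) \<mapsto> (s l, lt / s) (v).\<close>

section \<open>The series C and S\<close>

definition Cser_coeff :: "nat \<Rightarrow> complex" where
  "Cser_coeff n = (-1)^n / fact (2 * n)"

definition Sser_coeff :: "nat \<Rightarrow> complex" where
  "Sser_coeff n = (-1)^n / fact (2 * n + 1)"

definition Sser' :: "complex \<Rightarrow> complex" where
  "Sser' Q = (\<Sum>n. diffs Sser_coeff n * Q^n)"

definition Sser'' :: "complex \<Rightarrow> complex" where
  "Sser'' Q = (\<Sum>n. diffs (diffs Sser_coeff) n * Q^n)"

lemma summable_alternating_inverse_fact: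
  fixes g :: "nat \<Rightarrow> nat"
  assumes "\<And>n. n \<le> g n"
  shows "summable (\<lambda>n. ((-1)^n / fact (g n) :: complex) * y^n)"
proof (rule summable_comparison_test)
  show "summable (\<lambda>n. norm y ^ n / fact n)"
    using summable_exp[of "norm y"] by (simp add: field_simps)
  have "norm y ^ n / fact (g n) \<le> norm y ^ n / fact n" for n
    using assms fact_mono by (intro divide_left_mono) auto
  then show "\<exists>N. \<forall>n\<ge>N. norm ((-1)^n / fact (g n) * y^n) \<le> norm y ^ n / fact n"
    by (simp add: norm_mult norm_divide norm_power)
qed

lemma summable_Cser_coeff: "summable (\<lambda>n. Cser_coeff n * y^n)"
  unfolding Cser_coeff_def by (rule summable_alternating_inverse_fact) auto

lemma summable_Sser_coeff: "summable (\<lambda>n. Sser_coeff n * y^n)"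
  unfolding Sser_coeff_def by (rule summable_alternating_inverse_fact) auto

lemma summable_diffs_Sser_coeff: "summable (\<lambda>n. diffs Sser_coeff n * y^n)"
  by (rule termdiff_converges_all) (rule summable_Sser_coeff)

lemma Cser_eq_powser: "Cser Q = (\<Sum>n. Cser_coeff n * Q^n)"
  unfolding Cser_def Cser_coeff_def power_minus[of Q] by (simp add: field_simps)

lemma Sser_eq_powser: "Sser Q = (\<Sum>n. Sser_coeff n * Q^n)"
  unfolding Sser_def Sser_coeff_def power_minus[of Q] by (simp add: field_simps)

lemma fact_double_Suc: "fact (2 * Suc n) = (2 * of_nat (Suc n) * fact (2 * n + 1) :: complex)"
  by (simp add: algebra_simps del: of_nat_Suc) (simp add: algebra_simps)

lemma diffs_Cser_coeff: "diffs Cser_coeff n = - Sser_coeff n / 2"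
  unfolding diffs_def Cser_coeff_def Sser_coeff_def fact_double_Suc
  by (simp add: field_simps del: of_nat_Suc)

lemma Cser_coeff_Suc_minus_Sser_coeff_Suc:
  "Cser_coeff (Suc n) - Sser_coeff (Suc n) = 2 * diffs Sser_coeff n"
proof -
  define f :: complex where "f = fact (2 * n + 1)"
  define m :: complex where "m = of_nat (Suc n)"
  define q :: complex where "q = of_nat (Suc (2 * Suc n))"
  have "f \<noteq> 0" unfolding f_def by (rule fact_nonzero)
  have "m \<noteq> 0" unfolding m_def by (rule of_nat_neq_0)
  have "q \<noteq> 0" unfolding q_def by (rule of_nat_neq_0)
  have q: "q = 2 * m + 1" unfolding q_def m_def by simp
  have f2: "fact (2 * Suc n) = 2 * m * f" unfolding m_def f_def by (rule fact_double_Suc)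
  have C: "Cser_coeff (Suc n) = (-1)^Suc n / (2 * m * f)"
    and S: "Sser_coeff (Suc n) = (-1)^Suc n / (q * (2 * m * f))"
    and dS: "diffs Sser_coeff n = m * Sser_coeff (Suc n)"
    unfolding Cser_coeff_def Sser_coeff_def diffs_def f2 q_def m_def
    by (simp_all only: Suc_eq_plus1[symmetric] fact_Suc f2[unfolded m_def])
  show ?thesis
    unfolding dS C S using \<open>f \<noteq> 0\<close> \<open>m \<noteq> 0\<close> \<open>q \<noteq> 0\<close>
    by (simp add: field_simps) (simp add: q algebra_simps)
qed

lemma DERIV_Cser: "(Cser has_field_derivative - Sser Q / 2) (at Q)"
proof -
  have "(Cser has_field_derivative (\<Sum>n. diffs Cser_coeff n * Q^n)) (at Q)"
    unfolding Cser_eq_powser[abs_def]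
    by (rule termdiffs_strong_converges_everywhere) (rule summable_Cser_coeff)
  moreover have "(\<lambda>n. diffs Cser_coeff n * Q^n) sums (- Sser Q / 2)"
    unfolding diffs_Cser_coeff Sser_eq_powser
    using sums_divide[OF sums_minus[OF summable_sums[OF summable_Sser_coeff[of Q]]], of 2] by simp
  ultimately show ?thesis by (simp add: sums_iff)
qed

lemma DERIV_Sser: "(Sser has_field_derivative Sser' Q) (at Q)"
  unfolding Sser_eq_powser[abs_def] Sser'_def
  by (rule termdiffs_strong_converges_everywhere) (rule summable_Sser_coeff)

lemma DERIV_Sser': "(Sser' has_field_derivative Sser'' Q) (at Q)"
  unfolding Sser'_def Sser''_def
  by (rule termdiffs_strong_converges_everywhere) (rule summable_diffs_Sser_coeff)

lemma Cser_minus_Sser: "Cser Q - Sser Q = 2 * Q * Sser' Q"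
proof -
  have "(\<lambda>n. Cser_coeff n * Q^n - Sser_coeff n * Q^n) sums (Cser Q - Sser Q)"
    unfolding Cser_eq_powser Sser_eq_powser
    by (intro sums_diff summable_sums summable_Cser_coeff summable_Sser_coeff)
  then have "(\<lambda>n. Cser_coeff (Suc n) * Q^Suc n - Sser_coeff (Suc n) * Q^Suc n) sums (Cser Q - Sser Q)"
    by (subst sums_Suc_iff) (simp add: Cser_coeff_def Sser_coeff_def)
  moreover have "Cser_coeff (Suc n) * Q^Suc n - Sser_coeff (Suc n) * Q^Suc n
      = 2 * Q * (diffs Sser_coeff n * Q^n)" for n
  proof -
    have "Cser_coeff (Suc n) * Q^Suc n - Sser_coeff (Suc n) * Q^Suc n
        = (Cser_coeff (Suc n) - Sser_coeff (Suc n)) * Q^Suc n"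
      by (rule left_diff_distrib[symmetric])
    then show ?thesis unfolding Cser_coeff_Suc_minus_Sser_coeff_Suc by (simp add: mult_ac)
  qed
  ultimately have "(\<lambda>n. 2 * Q * (diffs Sser_coeff n * Q^n)) sums (Cser Q - Sser Q)"
    by simp
  moreover have "(\<lambda>n. 2 * Q * (diffs Sser_coeff n * Q^n)) sums (2 * Q * Sser' Q)"
    unfolding Sser'_def by (intro sums_mult summable_sums summable_diffs_Sser_coeff)
  ultimately show ?thesis by (rule sums_unique2)
qed

lemma Sser'_ode: "2 * Q * Sser'' Q = - Sser Q / 2 - 3 * Sser' Q"
proof -
  have "((\<lambda>Q. 2 * Q * Sser' Q) has_field_derivative 2 * Sser' Q + 2 * Q * Sser'' Q) (at Q)"
    by (auto intro!: derivative_eq_intros DERIV_Sser')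
  moreover have "((\<lambda>Q. Cser Q - Sser Q) has_field_derivative - Sser Q / 2 - Sser' Q) (at Q)"
    by (auto intro!: derivative_eq_intros DERIV_Cser DERIV_Sser)
  ultimately have "2 * Sser' Q + 2 * Q * Sser'' Q = - Sser Q / 2 - Sser' Q"
    unfolding Cser_minus_Sser by (rule DERIV_unique)
  then show ?thesis by algebra
qed

lemma Cser_square: "Cser (s^2) = cos s"
proof -
  have "(\<lambda>n. cos_coeff (2 * n) *\<^sub>R s ^ (2 * n)) sums cos s"
    using cos_converges[of s]
    by (subst sums_mono_reindex[of "\<lambda>n. 2 * n"])
       (auto simp: strict_mono_def cos_coeff_def elim!: evenE)
  also have "(\<lambda>n. cos_coeff (2 * n) *\<^sub>R s ^ (2 * n)) = (\<lambda>n. (- (s^2))^n / fact (2 * n))"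
    unfolding power_minus[of "s^2"]
    by (simp add: fun_eq_iff cos_coeff_def power_mult scaleR_conv_of_real)
  finally show ?thesis unfolding Cser_def by (simp add: sums_iff)
qed

lemma Sser_square: "s * Sser (s^2) = sin s"
proof -
  have "(\<lambda>n. sin_coeff (2 * n + 1) *\<^sub>R s ^ (2 * n + 1)) sums sin s"
    using sin_converges[of s]
    by (subst sums_mono_reindex[of "\<lambda>n. 2 * n + 1"])
       (auto simp: strict_mono_def sin_coeff_def elim!: oddE)
  also have "(\<lambda>n. sin_coeff (2 * n + 1) *\<^sub>R s ^ (2 * n + 1)) = (\<lambda>n. s * ((- (s^2))^n / fact (2 * n + 1)))"
    unfolding power_minus[of "s^2"]
    by (simp add: fun_eq_iff sin_coeff_def power_mult scaleR_conv_of_real)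
  finally have "(\<lambda>n. s * ((- (s^2))^n / fact (2 * n + 1))) sums sin s" .
  moreover have "(\<lambda>n. s * ((- (s^2))^n / fact (2 * n + 1))) sums (s * Sser (s^2))"
    unfolding Sser_def
    using summable_Sser_coeff[of "s^2"]
    by (intro sums_mult) (simp add: Sser_coeff_def power_minus[of "s^2"] summable_sums)
  ultimately show ?thesis by (rule sums_unique2[symmetric])
qed

lemma Cser_0: "Cser 0 = 1"
  using Cser_square[of 0] by simp

lemma Sser_0: "Sser 0 = 1"
  unfolding Sser_eq_powser using powser_zero[of Sser_coeff] by (simp add: Sser_coeff_def)


section \<open>The profile Phi and its differential equation\<close>

definition Qpm :: "complex \<times> complex \<Rightarrow> complex" where
  "Qpm z = (fst z)^2 / 4 + snd z"

definition Phi :: "complex \<times> complex \<Rightarrow> complex" where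
  "Phi z = exp (\<i> * fst z / 2) * (Cser (Qpm z) + \<i> * fst z / 2 * Sser (Qpm z))"

definition Phi_P :: "complex \<times> complex \<Rightarrow> complex" where
  "Phi_P z = exp (\<i> * fst z / 2) * (\<i> / 2 * Cser (Qpm z) + (\<i> / 2 - fst z / 2) * Sser (Qpm z)
     + \<i> * (fst z)^2 / 4 * Sser' (Qpm z))"

definition Phi_M :: "complex \<times> complex \<Rightarrow> complex" where
  "Phi_M z = exp (\<i> * fst z / 2) * (- Sser (Qpm z) / 2 + \<i> * fst z / 2 * Sser' (Qpm z))"

definition Phi_PP :: "complex \<times> complex \<Rightarrow> complex" where
  "Phi_PP z = exp (\<i> * fst z / 2) * (- Cser (Qpm z) / 4 + (-3/4 - 3 * \<i> * fst z / 8) * Sser (Qpm z)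
     + (-3 * (fst z)^2 / 8 + 3 * \<i> * fst z / 4) * Sser' (Qpm z) + \<i> * (fst z)^3 / 8 * Sser'' (Qpm z))"

definition Phi_PM :: "complex \<times> complex \<Rightarrow> complex" where
  "Phi_PM z = exp (\<i> * fst z / 2) * (- \<i> / 4 * Sser (Qpm z) + (\<i> / 2 - fst z / 2) * Sser' (Qpm z)
     + \<i> * (fst z)^2 / 4 * Sser'' (Qpm z))"

definition Phi_MM :: "complex \<times> complex \<Rightarrow> complex" where
  "Phi_MM z = exp (\<i> * fst z / 2) * (- Sser' (Qpm z) / 2 + \<i> * fst z / 2 * Sser'' (Qpm z))"

lemma DERIV_compose_has_derivative:
  assumes "(g has_field_derivative g') (at (f x))" and "(f has_derivative f') (at x within s)"
  shows "((\<lambda>x. g (f x)) has_derivative (\<lambda>h. f' h * g')) (at x within s)"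
proof -
  have "(g has_derivative (\<lambda>h. g' * h)) (at (f x))"
    using assms(1) by (simp add: has_field_derivative_def)
  from has_derivative_compose[OF assms(2) this] show ?thesis
    by (simp add: mult.commute)
qed

lemma has_derivative_Qpm: "(Qpm has_derivative (\<lambda>h. fst z / 2 * fst h + snd h)) (at z)"
proof -
  have Qpm: "Qpm = (\<lambda>z. inverse 4 * (fst z * fst z) + snd z)"
    by (auto simp: Qpm_def fun_eq_iff power2_eq_square field_simps)
  show ?thesis unfolding Qpm
    by (auto intro!: derivative_eq_intros simp: fun_eq_iff field_simps)
qed

lemmas has_derivative_series_Qpm =
  DERIV_compose_has_derivative[OF DERIV_Cser has_derivative_Qpm]
  DERIV_compose_has_derivative[OF DERIV_Sser has_derivative_Qpm]
  DERIV_compose_has_derivative[OF DERIV_Sser' has_derivative_Qpm]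

lemma has_derivative_exp_half:
  "((\<lambda>z. exp (\<i> * fst z / 2)) has_derivative (\<lambda>h. \<i> / 2 * exp (\<i> * fst z / 2) * fst h)) (at z)"
  by (rule has_derivative_eq_rhs, rule DERIV_compose_has_derivative[OF DERIV_exp],
      (rule derivative_intros)+) (auto simp: fun_eq_iff)

lemmas has_derivative_Phi_intros =
  derivative_intros has_derivative_series_Qpm has_derivative_exp_half numeral_neq_zero

lemma has_derivative_Phi: "(Phi has_derivative (\<lambda>h. Phi_P z * fst h + Phi_M z * snd h)) (at z)"
  unfolding Phi_def[abs_def]
  by (rule has_derivative_eq_rhs, (rule has_derivative_Phi_intros)+)
     (simp add: fun_eq_iff Phi_P_def Phi_M_def field_simps power2_eq_square)

lemma has_derivative_Phi_P: "(Phi_P has_derivative (\<lambda>h. Phi_PP z * fst h + Phi_PM z * snd h)) (at z)"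
  unfolding Phi_P_def[abs_def]
  by (rule has_derivative_eq_rhs, (rule has_derivative_Phi_intros)+)
     (simp add: fun_eq_iff Phi_PP_def Phi_PM_def field_simps power2_eq_square power3_eq_cube)

lemma has_derivative_Phi_M: "(Phi_M has_derivative (\<lambda>h. Phi_PM z * fst h + Phi_MM z * snd h)) (at z)"
  unfolding Phi_M_def[abs_def]
  by (rule has_derivative_eq_rhs, (rule has_derivative_Phi_intros)+)
     (simp add: fun_eq_iff Phi_PM_def Phi_MM_def field_simps power2_eq_square)

lemma Phi_pde: "Phi_PP z - fst z * Phi_PM z - 2 * Phi_M z - snd z * Phi_MM z = 0"
proof -
  define Q where "Q = Qpm z"
  define E where "E = exp (\<i> * fst z / 2)"
  define C S S' S'' where "C = Cser Q" and "S = Sser Q" and "S' = Sser' Q" and "S'' = Sser'' Q"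
  have M: "snd z = Q - (fst z)^2 / 4" unfolding Q_def Qpm_def by simp
  have "Phi_PP z - fst z * Phi_PM z - 2 * Phi_M z - snd z * Phi_MM z
     = E * (- (\<i> * fst z / 4) * (2 * Q * S'' + S / 2 + 3 * S') + (2 * Q * S' - C + S) / 4)"
    unfolding Phi_PP_def Phi_PM_def Phi_M_def Phi_MM_def Q_def[symmetric] E_def[symmetric]
      C_def[symmetric] S_def[symmetric] S'_def[symmetric] S''_def[symmetric] M
    by (simp add: field_simps power2_eq_square power3_eq_cube)
  also have "\<dots> = 0"
    unfolding C_def S_def S'_def S''_def Sser'_ode Cser_minus_Sser[symmetric] by simp
  finally show ?thesis .
qed

definition cross_term ::
    "real \<Rightarrow> complex \<times> complex \<Rightarrow> complex \<times> complex \<Rightarrow> complex \<times> complex \<Rightarrow> complex" where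
  "cross_term N l lt u = of_real N * fst l * snd l * br u lt * brh u lt / of_real (normsq u)"

lemma phi_eq_Phi: "phi N l lt u = Phi (pdx l lt u, cross_term N l lt u)"
  unfolding phi_def Phi_def Qpm_def Qf_def cross_term_def by (simp add: algebra_simps)


section \<open>Wirtinger calculus in doubled coordinates\<close>

text \<open>A function g of u is written as g u = K (u, cnj2 u) with K holomorphic on pairs
  X = ((x1, x2), (y1, y2)), the y-variables standing for the conjugates of u.  The Wirtinger
  derivatives of g are then the ordinary partial derivatives of K (Wirtinger_eq_partials).\<close>

type_synonym c2c2 = "(complex \<times> complex) \<times> (complex \<times> complex)"

definition lin4 :: "complex \<Rightarrow> complex \<Rightarrow> complex \<Rightarrow> complex \<Rightarrow> c2c2 \<Rightarrow> complex" where
  "lin4 a b c d = (\<lambda>X. a * fst (fst X) + b * snd (fst X) + c * fst (snd X) + d * snd (snd X))"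

definition has_partials ::
    "(c2c2 \<Rightarrow> complex) \<Rightarrow> complex \<Rightarrow> complex \<Rightarrow> complex \<Rightarrow> complex \<Rightarrow> c2c2 \<Rightarrow> bool" where
  "has_partials f a b c d X \<longleftrightarrow> (f has_derivative lin4 a b c d) (at X)"

definition has_u_partials :: "(c2c2 \<Rightarrow> complex) \<Rightarrow> complex \<Rightarrow> complex \<Rightarrow> c2c2 \<Rightarrow> bool" where
  "has_u_partials f a b X \<longleftrightarrow> (\<exists>c d. has_partials f a b c d X)"

definition cnj2 :: "complex \<times> complex \<Rightarrow> complex \<times> complex" where
  "cnj2 w = (cnj (fst w), cnj (snd w))"

lemma has_partials_cong:
  "has_partials f a b c d X \<Longrightarrow> a = a' \<Longrightarrow> b = b' \<Longrightarrow> c = c' \<Longrightarrow> d = d' \<Longrightarrow>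
    has_partials f a' b' c' d' X"
  by simp

lemma has_u_partialsI:
  "has_partials f a' b' c d X \<Longrightarrow> a' = a \<Longrightarrow> b' = b \<Longrightarrow> has_u_partials f a b X"
  unfolding has_u_partials_def by blast

lemma has_partials_const: "has_partials (\<lambda>X. k) 0 0 0 0 X"
  unfolding has_partials_def lin4_def by (rule has_derivative_eq_rhs, rule has_derivative_const) auto

lemma has_partials_x1: "has_partials (\<lambda>X. fst (fst X)) 1 0 0 0 X"
  and has_partials_x2: "has_partials (\<lambda>X. snd (fst X)) 0 1 0 0 X"
  and has_partials_y1: "has_partials (\<lambda>X. fst (snd X)) 0 0 1 0 X"
  and has_partials_y2: "has_partials (\<lambda>X. snd (snd X)) 0 0 0 1 X"
  unfolding has_partials_def lin4_def
  by (rule has_derivative_eq_rhs, (rule derivative_intros)+, auto)+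

lemma has_partials_add:
  "has_partials f a b c d X \<Longrightarrow> has_partials g a' b' c' d' X \<Longrightarrow>
    has_partials (\<lambda>X. f X + g X) (a + a') (b + b') (c + c') (d + d') X"
  unfolding has_partials_def
  by (drule (1) has_derivative_add) (auto simp: lin4_def algebra_simps elim!: has_derivative_eq_rhs)

lemma has_partials_diff:
  "has_partials f a b c d X \<Longrightarrow> has_partials g a' b' c' d' X \<Longrightarrow>
    has_partials (\<lambda>X. f X - g X) (a - a') (b - b') (c - c') (d - d') X"
  unfolding has_partials_def
  by (drule (1) has_derivative_diff) (auto simp: lin4_def algebra_simps elim!: has_derivative_eq_rhs)

lemma has_partials_mult:
  "has_partials f a b c d X \<Longrightarrow> has_partials g a' b' c' d' X \<Longrightarrow>
    has_partials (\<lambda>X. f X * g X)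
      (f X * a' + a * g X) (f X * b' + b * g X) (f X * c' + c * g X) (f X * d' + d * g X) X"
  unfolding has_partials_def
  by (drule (1) has_derivative_mult) (auto simp: lin4_def algebra_simps elim!: has_derivative_eq_rhs)

lemma has_partials_inverse:
  "has_partials f a b c d X \<Longrightarrow> f X \<noteq> 0 \<Longrightarrow>
    has_partials (\<lambda>X. inverse (f X)) (- a / (f X)^2) (- b / (f X)^2) (- c / (f X)^2) (- d / (f X)^2) X"
  unfolding has_partials_def
  by (drule (1) Deriv.has_derivative_inverse[rotated])
     (auto simp: lin4_def power2_eq_square divide_inverse algebra_simps elim!: has_derivative_eq_rhs)

lemmas has_partials_intros =
  has_partials_add has_partials_diff has_partials_mult has_partials_inverse
  has_partials_x1 has_partials_x2 has_partials_y1 has_partials_y2 has_partials_const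

lemma has_partials_compose:
  assumes "(F has_derivative (\<lambda>z. Fp * fst z + Fm * snd z)) (at (p X, m X))"
    and "has_partials p a b c d X" and "has_partials m a' b' c' d' X"
  shows "has_partials (\<lambda>X. F (p X, m X))
    (Fp * a + Fm * a') (Fp * b + Fm * b') (Fp * c + Fm * c') (Fp * d + Fm * d') X"
proof -
  have "((\<lambda>X. (p X, m X)) has_derivative (\<lambda>h. (lin4 a b c d h, lin4 a' b' c' d' h))) (at X)"
    using assms(2,3) unfolding has_partials_def by (rule has_derivative_Pair)
  from has_derivative_compose[OF this assms(1)] show ?thesis
    unfolding has_partials_def by (rule has_derivative_eq_rhs) (auto simp: lin4_def algebra_simps)
qed

lemma has_u_partials_cong:
  "has_u_partials f a b X \<Longrightarrow> a = a' \<Longrightarrow> b = b' \<Longrightarrow> has_u_partials f a' b' X"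
  by simp

lemma has_u_partials_add:
  "has_u_partials f a b X \<Longrightarrow> has_u_partials g a' b' X \<Longrightarrow>
    has_u_partials (\<lambda>X. f X + g X) (a + a') (b + b') X"
  unfolding has_u_partials_def using has_partials_add by blast

lemma has_u_partials_mult:
  "has_u_partials f a b X \<Longrightarrow> has_u_partials g a' b' X \<Longrightarrow>
    has_u_partials (\<lambda>X. f X * g X) (f X * a' + a * g X) (f X * b' + b * g X) X"
  unfolding has_u_partials_def using has_partials_mult by blast

lemma has_u_partials_compose:
  assumes "(F has_derivative (\<lambda>z. Fp * fst z + Fm * snd z)) (at (p X, m X))"
    and "has_u_partials p a b X" and "has_u_partials m a' b' X"
  shows "has_u_partials (\<lambda>X. F (p X, m X)) (Fp * a + Fm * a') (Fp * b + Fm * b') X"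
  using assms has_partials_compose unfolding has_u_partials_def by blast

lemma has_partials_imp_u_partials: "has_partials f a b c d X \<Longrightarrow> has_u_partials f a b X"
  unfolding has_u_partials_def by blast

lemma dirD_eq_partials:
  assumes K: "has_partials K a b c d (u, cnj2 u)" and g: "\<forall>\<^sub>F w in nhds u. g w = K (w, cnj2 w)"
  shows "dirD g u v = a * fst v + b * snd v + c * cnj (fst v) + d * cnj (snd v)"
proof -
  define l where "l = (\<lambda>t::real. (u + t *\<^sub>R v, cnj2 (u + t *\<^sub>R v)))"
  have l: "l = (\<lambda>t. (u, cnj2 u) + t *\<^sub>R (v, cnj2 v))"
    by (auto simp: l_def cnj2_def fun_eq_iff scaleR_conv_of_real)
  have "(l has_derivative (\<lambda>t. t *\<^sub>R (v, cnj2 v))) (at 0)"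
    unfolding l by (rule has_derivative_eq_rhs, (rule derivative_intros)+) auto
  moreover have "(K has_derivative lin4 a b c d) (at (l 0))"
    using K by (simp add: has_partials_def l_def)
  ultimately have "((\<lambda>t. K (l t)) has_vector_derivative lin4 a b c d (v, cnj2 v)) (at 0)"
    unfolding has_vector_derivative_def
    by (rule has_derivative_eq_rhs[OF has_derivative_compose])
       (auto simp: lin4_def fun_eq_iff cnj2_def scaleR_conv_of_real algebra_simps)
  moreover have "\<forall>\<^sub>F t in at 0. K (l t) = g (u + t *\<^sub>R v)"
  proof -
    have "((\<lambda>t::real. u + t *\<^sub>R v) \<longlongrightarrow> u) (at 0)"
      by (rule tendsto_eq_intros | simp)+
    from eventually_compose_filterlim[OF g this] show ?thesis
      unfolding l_def by (simp add: eq_commute)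
  qed
  moreover have "K (l 0) = g (u + 0 *\<^sub>R v)"
    using eventually_nhds_x_imp_x[OF g] by (simp add: l_def)
  ultimately have "((\<lambda>t. g (u + t *\<^sub>R v)) has_vector_derivative lin4 a b c d (v, cnj2 v)) (at 0)"
    unfolding has_vector_derivative_def by (rule has_derivative_transform_eventually) simp_all
  then show ?thesis
    unfolding dirD_def by (simp add: vector_derivative_at lin4_def cnj2_def)
qed

lemma Wirtinger_eq_partials:
  assumes "has_partials K a b c d (u, cnj2 u)" and "\<forall>\<^sub>F w in nhds u. g w = K (w, cnj2 w)"
  shows "dz 1 g u = a" "dz 2 g u = b" "dzb 1 g u = c" "dzb 2 g u = d"
  using dirD_eq_partials[OF assms] by (simp_all add: dz_def dzb_def ev_def field_simps)

lemma Wirtinger_eq_u_partials: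
  assumes "has_u_partials K a b (u, cnj2 u)" and "\<forall>\<^sub>F w in nhds u. g w = K (w, cnj2 w)"
  shows "dz 1 g u = a" "dz 2 g u = b"
  using assms Wirtinger_eq_partials unfolding has_u_partials_def by blast+

text \<open>The ingredients of phi in doubled coordinates: brX, brhX, normsqX, pdxX and crossX are
  [u lt], [uhat lt], the squared norm, p.x and the cross term k [u lt][uhat lt]/|u|^2 of Q
  (with k = N l1 l2), as functions of (x, y) = (u, conj u).\<close>

definition brX :: "complex \<Rightarrow> complex \<Rightarrow> c2c2 \<Rightarrow> complex" where
  "brX t1 t2 X = fst (fst X) * t1 + snd (fst X) * t2"

definition brhX :: "complex \<Rightarrow> complex \<Rightarrow> c2c2 \<Rightarrow> complex" where
  "brhX t1 t2 X = fst (snd X) * t2 - snd (snd X) * t1"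

definition normsqX :: "c2c2 \<Rightarrow> complex" where
  "normsqX X = fst (fst X) * fst (snd X) + snd (fst X) * snd (snd X)"

definition pdxX :: "complex \<Rightarrow> complex \<Rightarrow> complex \<Rightarrow> complex \<Rightarrow> c2c2 \<Rightarrow> complex" where
  "pdxX l1 l2 t1 t2 X = l1 * brX t1 t2 X + l2 * brhX t1 t2 X"

definition crossX :: "complex \<Rightarrow> complex \<Rightarrow> complex \<Rightarrow> c2c2 \<Rightarrow> complex" where
  "crossX k t1 t2 X = k * brX t1 t2 X * brhX t1 t2 X * inverse (normsqX X)"

lemma normsqX_cnj2: "normsqX (w, cnj2 w) = of_real (normsq w)"
proof -
  have "fst w * cnj (fst w) = of_real ((cmod (fst w))^2)"
    and "snd w * cnj (snd w) = of_real ((cmod (snd w))^2)"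
    using complex_norm_square by metis+
  then show ?thesis unfolding normsqX_def cnj2_def normsq_def by simp
qed

lemma normsq_pos: "w \<noteq> 0 \<Longrightarrow> normsq w > 0"
  unfolding normsq_def by (cases w) (auto simp: zero_prod_def add_pos_nonneg add_nonneg_pos)

lemma normsqX_cnj2_nonzero: "w \<noteq> 0 \<Longrightarrow> normsqX (w, cnj2 w) \<noteq> 0"
  using normsq_pos[of w] by (simp add: normsqX_cnj2)

lemma has_partials_brX: "has_partials (brX t1 t2) t1 t2 0 0 X"
  unfolding brX_def[abs_def] by (rule has_partials_cong, (rule has_partials_intros)+) simp_all

lemma has_partials_brhX: "has_partials (brhX t1 t2) 0 0 t2 (- t1) X"
  unfolding brhX_def[abs_def] by (rule has_partials_cong, (rule has_partials_intros)+) simp_all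

lemma has_partials_normsqX:
  "has_partials normsqX (fst (snd X)) (snd (snd X)) (fst (fst X)) (snd (fst X)) X"
  unfolding normsqX_def[abs_def] by (rule has_partials_cong, (rule has_partials_intros)+) simp_all

lemma has_partials_pdxX: "has_partials (pdxX l1 l2 t1 t2) (l1 * t1) (l1 * t2) (l2 * t2) (- l2 * t1) X"
  unfolding pdxX_def[abs_def]
  by (rule has_partials_cong, (rule has_partials_intros has_partials_brX has_partials_brhX)+) simp_all

definition crossX_x1 :: "complex \<Rightarrow> complex \<Rightarrow> complex \<Rightarrow> c2c2 \<Rightarrow> complex" where
  "crossX_x1 k t1 t2 X =
    k * (t1 * brhX t1 t2 X * normsqX X - brX t1 t2 X * brhX t1 t2 X * fst (snd X)) / (normsqX X)^2"

definition crossX_x2 :: "complex \<Rightarrow> complex \<Rightarrow> complex \<Rightarrow> c2c2 \<Rightarrow> complex" where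
  "crossX_x2 k t1 t2 X =
    k * (t2 * brhX t1 t2 X * normsqX X - brX t1 t2 X * brhX t1 t2 X * snd (snd X)) / (normsqX X)^2"

definition crossX_y1 :: "complex \<Rightarrow> complex \<Rightarrow> complex \<Rightarrow> c2c2 \<Rightarrow> complex" where
  "crossX_y1 k t1 t2 X =
    k * brX t1 t2 X * (t2 * normsqX X - brhX t1 t2 X * fst (fst X)) * (inverse (normsqX X))^2"

definition crossX_y2 :: "complex \<Rightarrow> complex \<Rightarrow> complex \<Rightarrow> c2c2 \<Rightarrow> complex" where
  "crossX_y2 k t1 t2 X =
    k * brX t1 t2 X * (- t1 * normsqX X - brhX t1 t2 X * snd (fst X)) * (inverse (normsqX X))^2"

text \<open>cross_xy is the mixed second derivative d^2/dx_c dy_q of k a b / r for a holomorphic in x and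
  b in y, with tc = da/dx_c, Bq = db/dy_q, yc = dr/dx_c, xq = dr/dy_q and d = d^2 r/dx_c dy_q.\<close>

definition cross_xy ::
    "complex \<Rightarrow> complex \<Rightarrow> complex \<Rightarrow> complex \<Rightarrow> complex \<Rightarrow>
     complex \<Rightarrow> complex \<Rightarrow> complex \<Rightarrow> complex \<Rightarrow> complex" where
  "cross_xy k a b r tc Bq xq yc d =
    k * tc * (Bq * r - b * xq) / r^2 + k * a * (Bq * yc - b * d) / r^2
    - 2 * k * a * (Bq * r - b * xq) * yc / r^3"

definition crossX_xy :: "complex \<Rightarrow> complex \<Rightarrow> complex \<Rightarrow> nat \<Rightarrow> nat \<Rightarrow> c2c2 \<Rightarrow> complex" where
  "crossX_xy k t1 t2 c q X =
    cross_xy k (brX t1 t2 X) (brhX t1 t2 X) (normsqX X)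
      (if c = 1 then t1 else t2) (if q = 1 then t2 else - t1)
      (if q = 1 then fst (fst X) else snd (fst X)) (if c = 1 then fst (snd X) else snd (snd X))
      (if c = q then 1 else 0)"

context
  fixes X :: c2c2
  assumes r: "normsqX X \<noteq> 0"
begin

lemma has_partials_crossX:
  "has_partials (crossX k t1 t2) (crossX_x1 k t1 t2 X) (crossX_x2 k t1 t2 X) (crossX_y1 k t1 t2 X) (crossX_y2 k t1 t2 X) X"
  unfolding crossX_def[abs_def]
  by (rule has_partials_cong,
      (rule has_partials_intros has_partials_brX has_partials_brhX has_partials_normsqX r)+)
     (use r in \<open>simp_all add: crossX_x1_def crossX_x2_def crossX_y1_def crossX_y2_def
        field_simps power2_eq_square\<close>)

lemma has_u_partials_crossX_y1:
  "has_u_partials (crossX_y1 k t1 t2) (crossX_xy k t1 t2 1 1 X) (crossX_xy k t1 t2 2 1 X) X"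
  unfolding crossX_y1_def[abs_def] power2_eq_square
  by (rule has_u_partialsI,
      (rule has_partials_intros has_partials_brX has_partials_brhX has_partials_normsqX r)+)
     (use r in \<open>simp_all add: crossX_xy_def cross_xy_def field_simps power2_eq_square power3_eq_cube\<close>)

lemma has_u_partials_crossX_y2:
  "has_u_partials (crossX_y2 k t1 t2) (crossX_xy k t1 t2 1 2 X) (crossX_xy k t1 t2 2 2 X) X"
  unfolding crossX_y2_def[abs_def] power2_eq_square
  by (rule has_u_partialsI,
      (rule has_partials_intros has_partials_brX has_partials_brhX has_partials_normsqX r)+)
     (use r in \<open>simp_all add: crossX_xy_def cross_xy_def field_simps power2_eq_square power3_eq_cube\<close>)

end


section \<open>The Laplacian of a profile\<close>

context
  fixes X :: c2c2 and k t1 t2 :: complex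
  assumes r: "normsqX X \<noteq> 0"
begin

lemma crossX_euler_x: "fst (fst X) * crossX_x1 k t1 t2 X + snd (fst X) * crossX_x2 k t1 t2 X = 0"
  using r unfolding crossX_x1_def crossX_x2_def brX_def brhX_def normsqX_def
  by (simp add: field_simps power2_eq_square) algebra

lemma crossX_euler_y: "fst (snd X) * crossX_y1 k t1 t2 X + snd (snd X) * crossX_y2 k t1 t2 X = 0"
  using r unfolding crossX_y1_def crossX_y2_def brX_def brhX_def normsqX_def
  by (simp add: field_simps power2_eq_square) algebra

lemma crossX_euler_xy:
  "fst (fst X) * (fst (snd X) * crossX_xy k t1 t2 1 1 X + snd (snd X) * crossX_xy k t1 t2 1 2 X)
   + snd (fst X) * (fst (snd X) * crossX_xy k t1 t2 2 1 X + snd (snd X) * crossX_xy k t1 t2 2 2 X) = 0"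
  using r unfolding crossX_xy_def cross_xy_def brX_def brhX_def normsqX_def
  by (simp add: field_simps power2_eq_square power3_eq_cube) algebra

lemma crossX_xy_trace:
  "crossX_xy k t1 t2 1 1 X + crossX_xy k t1 t2 2 2 X = - 2 * crossX k t1 t2 X / normsqX X"
  using r unfolding crossX_xy_def cross_xy_def crossX_def brX_def brhX_def normsqX_def
  by (simp add: field_simps power2_eq_square power3_eq_cube) algebra

lemma crossX_x_crossX_y:
  "crossX_x1 k t1 t2 X * crossX_y1 k t1 t2 X + crossX_x2 k t1 t2 X * crossX_y2 k t1 t2 X
   = - (crossX k t1 t2 X * crossX k t1 t2 X) / normsqX X"
  using r unfolding crossX_x1_def crossX_x2_def crossX_y1_def crossX_y2_def crossX_def brX_def brhX_def normsqX_def
  by (simp add: divide_simps power2_eq_square power3_eq_cube) algebra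

lemma pdxX_x_crossX_y:
  "l1 * t1 * crossX_y1 k t1 t2 X + l1 * t2 * crossX_y2 k t1 t2 X
   = - l1 * brX t1 t2 X * crossX k t1 t2 X / normsqX X"
  using r unfolding crossX_y1_def crossX_y2_def crossX_def brX_def brhX_def normsqX_def
  by (simp add: field_simps power2_eq_square) algebra

lemma crossX_x_pdxX_y:
  "crossX_x1 k t1 t2 X * (l2 * t2) + crossX_x2 k t1 t2 X * (- l2 * t1)
   = - l2 * brhX t1 t2 X * crossX k t1 t2 X / normsqX X"
  using r unfolding crossX_x1_def crossX_x2_def crossX_def brX_def brhX_def normsqX_def
  by (simp add: field_simps power2_eq_square) algebra

end

text \<open>For a profile F with partial derivatives Fp, Fm, Fpp, Fpm, Fmm, the chain rule gives
  profile_y1, profile_y2 as the y-derivatives of F (pdxX, crossX) and profile_xy c q as its mixed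
  second derivative in x_c and y_q.\<close>

definition profile_y1 ::
    "(complex \<times> complex \<Rightarrow> complex) \<Rightarrow> (complex \<times> complex \<Rightarrow> complex) \<Rightarrow>
     complex \<Rightarrow> complex \<Rightarrow> complex \<Rightarrow> complex \<Rightarrow> complex \<Rightarrow> c2c2 \<Rightarrow> complex" where
  "profile_y1 Fp Fm l1 l2 k t1 t2 X =
    Fp (pdxX l1 l2 t1 t2 X, crossX k t1 t2 X) * (l2 * t2)
    + Fm (pdxX l1 l2 t1 t2 X, crossX k t1 t2 X) * crossX_y1 k t1 t2 X"

definition profile_y2 ::
    "(complex \<times> complex \<Rightarrow> complex) \<Rightarrow> (complex \<times> complex \<Rightarrow> complex) \<Rightarrow>
     complex \<Rightarrow> complex \<Rightarrow> complex \<Rightarrow> complex \<Rightarrow> complex \<Rightarrow> c2c2 \<Rightarrow> complex" where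
  "profile_y2 Fp Fm l1 l2 k t1 t2 X =
    Fp (pdxX l1 l2 t1 t2 X, crossX k t1 t2 X) * (- l2 * t1)
    + Fm (pdxX l1 l2 t1 t2 X, crossX k t1 t2 X) * crossX_y2 k t1 t2 X"

definition profile_xy ::
    "(complex \<times> complex \<Rightarrow> complex) \<Rightarrow> (complex \<times> complex \<Rightarrow> complex) \<Rightarrow>
     (complex \<times> complex \<Rightarrow> complex) \<Rightarrow> (complex \<times> complex \<Rightarrow> complex) \<Rightarrow>
     complex \<Rightarrow> complex \<Rightarrow> complex \<Rightarrow> complex \<Rightarrow> complex \<Rightarrow> nat \<Rightarrow> nat \<Rightarrow> c2c2 \<Rightarrow> complex" where
  "profile_xy Fm Fpp Fpm Fmm l1 l2 k t1 t2 c q X =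
    (let z = (pdxX l1 l2 t1 t2 X, crossX k t1 t2 X);
         Px = (if c = 1 then l1 * t1 else l1 * t2);
         Mx = (if c = 1 then crossX_x1 k t1 t2 X else crossX_x2 k t1 t2 X);
         Py = (if q = 1 then l2 * t2 else - l2 * t1);
         My = (if q = 1 then crossX_y1 k t1 t2 X else crossX_y2 k t1 t2 X)
     in (Fpp z * Px + Fpm z * Mx) * Py + (Fpm z * Px + Fmm z * Mx) * My + Fm z * crossX_xy k t1 t2 c q X)"

lemma laplacian_profile_algebra:
  fixes l1 l2 k t1 t2 N :: complex and Fm Fpp Fpm Fmm :: "complex \<times> complex \<Rightarrow> complex"
  assumes r: "normsqX X \<noteq> 0" and k: "k = N * l1 * l2"
  defines "h \<equiv> \<lambda>c q. profile_xy Fm Fpp Fpm Fmm l1 l2 k t1 t2 c q X"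
    and "z \<equiv> (pdxX l1 l2 t1 t2 X, crossX k t1 t2 X)"
  shows "h 1 1 + h 2 2 + N / (normsqX X)^2 *
      (fst (fst X) * (fst (snd X) * h 1 1 + snd (snd X) * h 1 2)
       + snd (fst X) * (fst (snd X) * h 2 1 + snd (snd X) * h 2 2))
    = crossX k t1 t2 X / normsqX X * (Fpp z - fst z * Fpm z - 2 * Fm z - snd z * Fmm z)"
proof -
  let ?x1 = "fst (fst X)" and ?x2 = "snd (fst X)" and ?y1 = "fst (snd X)" and ?y2 = "snd (snd X)"
  let ?a = "brX t1 t2 X" and ?b = "brhX t1 t2 X" and ?r = "normsqX X" and ?M = "crossX k t1 t2 X"
  let ?Mx1 = "crossX_x1 k t1 t2 X" and ?Mx2 = "crossX_x2 k t1 t2 X"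
    and ?My1 = "crossX_y1 k t1 t2 X" and ?My2 = "crossX_y2 k t1 t2 X"
  let ?Mxy = "\<lambda>c q. crossX_xy k t1 t2 c q X"
  have "h 1 1 + h 2 2 + N / ?r^2 * (?x1 * (?y1 * h 1 1 + ?y2 * h 1 2) + ?x2 * (?y1 * h 2 1 + ?y2 * h 2 2))
    = Fpm z * (?Mx1 * (l2 * t2) + ?Mx2 * (- l2 * t1)) + Fpm z * (l1 * t1 * ?My1 + l1 * t2 * ?My2)
      + Fmm z * (?Mx1 * ?My1 + ?Mx2 * ?My2) + Fm z * (?Mxy 1 1 + ?Mxy 2 2)
      + N / ?r^2 * (Fpp z * (l1 * ?a) * (l2 * ?b) + Fpm z * (?x1 * ?Mx1 + ?x2 * ?Mx2) * (l2 * ?b)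
          + Fpm z * (l1 * ?a) * (?y1 * ?My1 + ?y2 * ?My2) + Fmm z * (?x1 * ?Mx1 + ?x2 * ?Mx2) * (?y1 * ?My1 + ?y2 * ?My2)
          + Fm z * (?x1 * (?y1 * ?Mxy 1 1 + ?y2 * ?Mxy 1 2) + ?x2 * (?y1 * ?Mxy 2 1 + ?y2 * ?Mxy 2 2)))"
    unfolding h_def profile_xy_def Let_def z_def[symmetric] by (simp add: brX_def brhX_def algebra_simps)
  also have "\<dots> = ?M / ?r * (Fpp z - (l1 * ?a + l2 * ?b) * Fpm z - 2 * Fm z - ?M * Fmm z)"
    unfolding crossX_euler_x[OF r] crossX_euler_y[OF r] crossX_euler_xy[OF r] crossX_xy_trace[OF r]
      crossX_x_crossX_y[OF r] pdxX_x_crossX_y[OF r] crossX_x_pdxX_y[OF r]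
    using r by (simp add: k crossX_def field_simps power2_eq_square)
  finally show ?thesis by (simp add: z_def pdxX_def)
qed

context
  fixes F Fp Fm Fpp Fpm Fmm :: "complex \<times> complex \<Rightarrow> complex" and l1 l2 k t1 t2 :: complex
  assumes F: "\<And>z. (F has_derivative (\<lambda>h. Fp z * fst h + Fm z * snd h)) (at z)"
    and Fp: "\<And>z. (Fp has_derivative (\<lambda>h. Fpp z * fst h + Fpm z * snd h)) (at z)"
    and Fm: "\<And>z. (Fm has_derivative (\<lambda>h. Fpm z * fst h + Fmm z * snd h)) (at z)"
begin

lemma has_partials_profile:
  assumes "normsqX X \<noteq> 0"
  shows "\<exists>a b. has_partials (\<lambda>X. F (pdxX l1 l2 t1 t2 X, crossX k t1 t2 X))
    a b (profile_y1 Fp Fm l1 l2 k t1 t2 X) (profile_y2 Fp Fm l1 l2 k t1 t2 X) X"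
  unfolding profile_y1_def profile_y2_def
  by (intro exI has_partials_cong[OF has_partials_compose[OF F has_partials_pdxX has_partials_crossX[OF assms]]])
     (simp_all add: algebra_simps)

lemma has_u_partials_profile_y1:
  assumes "normsqX X \<noteq> 0"
  shows "has_u_partials (profile_y1 Fp Fm l1 l2 k t1 t2)
    (profile_xy Fm Fpp Fpm Fmm l1 l2 k t1 t2 1 1 X) (profile_xy Fm Fpp Fpm Fmm l1 l2 k t1 t2 2 1 X) X"
  unfolding profile_y1_def[abs_def]
  by (rule has_u_partials_cong,
      (rule has_u_partials_add has_u_partials_mult has_u_partials_compose[OF Fp] has_u_partials_compose[OF Fm]
        has_partials_imp_u_partials[OF has_partials_pdxX] has_partials_imp_u_partials[OF has_partials_crossX[OF assms]]
        has_partials_imp_u_partials[OF has_partials_const] has_u_partials_crossX_y1[OF assms])+)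
     (simp_all add: profile_xy_def Let_def algebra_simps)

lemma has_u_partials_profile_y2:
  assumes "normsqX X \<noteq> 0"
  shows "has_u_partials (profile_y2 Fp Fm l1 l2 k t1 t2)
    (profile_xy Fm Fpp Fpm Fmm l1 l2 k t1 t2 1 2 X) (profile_xy Fm Fpp Fpm Fmm l1 l2 k t1 t2 2 2 X) X"
  unfolding profile_y2_def[abs_def]
  by (rule has_u_partials_cong,
      (rule has_u_partials_add has_u_partials_mult has_u_partials_compose[OF Fp] has_u_partials_compose[OF Fm]
        has_partials_imp_u_partials[OF has_partials_pdxX] has_partials_imp_u_partials[OF has_partials_crossX[OF assms]]
        has_partials_imp_u_partials[OF has_partials_const] has_u_partials_crossX_y2[OF assms])+)
     (simp_all add: profile_xy_def Let_def algebra_simps)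

lemma eventually_dzb_profile:
  assumes f: "\<And>w. f w = F (pdxX l1 l2 t1 t2 (w, cnj2 w), crossX k t1 t2 (w, cnj2 w))"
    and "u \<noteq> 0"
  shows "\<forall>\<^sub>F w in nhds u. dzb 1 f w = profile_y1 Fp Fm l1 l2 k t1 t2 (w, cnj2 w)
                         \<and> dzb 2 f w = profile_y2 Fp Fm l1 l2 k t1 t2 (w, cnj2 w)"
proof -
  have "\<forall>\<^sub>F w in nhds u. w \<noteq> 0"
    using eventually_nhds_in_open[of "- {0}" u] \<open>u \<noteq> 0\<close> by (simp add: open_Compl)
  then show ?thesis
  proof eventually_elim
    case (elim w)
    then obtain a b where "has_partials (\<lambda>X. F (pdxX l1 l2 t1 t2 X, crossX k t1 t2 X)) a b
        (profile_y1 Fp Fm l1 l2 k t1 t2 (w, cnj2 w)) (profile_y2 Fp Fm l1 l2 k t1 t2 (w, cnj2 w)) (w, cnj2 w)"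
      using has_partials_profile normsqX_cnj2_nonzero by blast
    from Wirtinger_eq_partials(3,4)[OF this] show ?case
      using f by simp
  qed
qed

lemma burns_laplacian_profile:
  fixes N :: real and f :: "complex \<times> complex \<Rightarrow> complex"
  assumes pde: "\<And>z. Fpp z - fst z * Fpm z - 2 * Fm z - snd z * Fmm z = 0"
    and f: "\<And>w. f w = F (pdxX l1 l2 t1 t2 (w, cnj2 w), crossX k t1 t2 (w, cnj2 w))"
    and k: "k = of_real N * l1 * l2" and u: "u \<noteq> 0"
  shows "burns_laplacian N f u = 0"
proof -
  note dzb_f = eventually_dzb_profile[OF f u]
  define X where "X = (u, cnj2 u)"
  define h where "h = (\<lambda>c q. profile_xy Fm Fpp Fpm Fmm l1 l2 k t1 t2 c q X)"
  have "normsqX X \<noteq> 0" unfolding X_def using u by (rule normsqX_cnj2_nonzero)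
  have d1: "has_u_partials (profile_y1 Fp Fm l1 l2 k t1 t2) (h 1 1) (h 2 1) (u, cnj2 u)"
    and d2: "has_u_partials (profile_y2 Fp Fm l1 l2 k t1 t2) (h 1 2) (h 2 2) (u, cnj2 u)"
    using has_u_partials_profile_y1[OF \<open>normsqX X \<noteq> 0\<close>] has_u_partials_profile_y2[OF \<open>normsqX X \<noteq> 0\<close>]
    by (simp_all add: h_def X_def)
  have "\<forall>\<^sub>F w in nhds u. dzb 1 f w = profile_y1 Fp Fm l1 l2 k t1 t2 (w, cnj2 w)"
    and "\<forall>\<^sub>F w in nhds u. dzb 2 f w = profile_y2 Fp Fm l1 l2 k t1 t2 (w, cnj2 w)"
    by (rule eventually_mono[OF dzb_f], blast)+
  then have "dz 1 (dzb 1 f) u = h 1 1 \<and> dz 2 (dzb 2 f) u = h 2 2"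
    using Wirtinger_eq_u_partials(1)[OF d1] Wirtinger_eq_u_partials(2)[OF d2] by blast
  moreover have "dz 1 (\<lambda>w. \<Sum>b\<in>{1,2}. cnj (cu b w) * dzb b f w) u = cnj (fst u) * h 1 1 + cnj (snd u) * h 1 2"
    and "dz 2 (\<lambda>w. \<Sum>b\<in>{1,2}. cnj (cu b w) * dzb b f w) u = cnj (fst u) * h 2 1 + cnj (snd u) * h 2 2"
  proof -
    have "has_u_partials
        (\<lambda>X. fst (snd X) * profile_y1 Fp Fm l1 l2 k t1 t2 X + snd (snd X) * profile_y2 Fp Fm l1 l2 k t1 t2 X)
        (cnj (fst u) * h 1 1 + cnj (snd u) * h 1 2) (cnj (fst u) * h 2 1 + cnj (snd u) * h 2 2) (u, cnj2 u)"
      by (rule has_u_partials_cong, (rule has_u_partials_add has_u_partials_mult d1 d2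
            has_partials_imp_u_partials[OF has_partials_y1] has_partials_imp_u_partials[OF has_partials_y2])+)
         (simp_all add: cnj2_def)
    moreover have "\<forall>\<^sub>F w in nhds u. (\<Sum>b\<in>{1,2}. cnj (cu b w) * dzb b f w)
        = fst (snd (w, cnj2 w)) * profile_y1 Fp Fm l1 l2 k t1 t2 (w, cnj2 w)
          + snd (snd (w, cnj2 w)) * profile_y2 Fp Fm l1 l2 k t1 t2 (w, cnj2 w)"
      using dzb_f by eventually_elim (simp add: cu_def cnj2_def)
    ultimately show "dz 1 (\<lambda>w. \<Sum>b\<in>{1,2}. cnj (cu b w) * dzb b f w) u = cnj (fst u) * h 1 1 + cnj (snd u) * h 1 2"
      and "dz 2 (\<lambda>w. \<Sum>b\<in>{1,2}. cnj (cu b w) * dzb b f w) u = cnj (fst u) * h 2 1 + cnj (snd u) * h 2 2"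
      by (rule Wirtinger_eq_u_partials)+
  qed
  ultimately have "burns_laplacian N f u = of_real (2 / (1 + N / normsq u)) *
      (h 1 1 + h 2 2 + of_real N / (normsqX X)^2 * (fst u * (cnj (fst u) * h 1 1 + cnj (snd u) * h 1 2)
                                                + snd u * (cnj (fst u) * h 2 1 + cnj (snd u) * h 2 2)))"
    unfolding burns_laplacian_def X_def normsqX_cnj2 by (simp add: cu_def)
  also have "\<dots> = 0"
    using laplacian_profile_algebra[where Fm = Fm and Fpp = Fpp and Fpm = Fpm and Fmm = Fmm,
        OF \<open>normsqX X \<noteq> 0\<close> k] pde[of "(pdxX l1 l2 t1 t2 X, crossX k t1 t2 X)"]
    by (simp add: h_def X_def cnj2_def)
  finally show ?thesis .
qed

end

lemma phi_eq_Phi_doubled: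
  "phi N l lt w = Phi (pdxX (fst l) (snd l) (fst lt) (snd lt) (w, cnj2 w),
                       crossX (of_real N * fst l * snd l) (fst lt) (snd lt) (w, cnj2 w))"
proof -
  have "pdxX (fst l) (snd l) (fst lt) (snd lt) (w, cnj2 w) = pdx l lt w"
    by (simp add: pdxX_def brX_def brhX_def cnj2_def pdx_def brh_def br_def uhat_def algebra_simps)
  moreover have "crossX (of_real N * fst l * snd l) (fst lt) (snd lt) (w, cnj2 w) = cross_term N l lt w"
    unfolding crossX_def cross_term_def normsqX_cnj2[symmetric]
    by (simp add: brX_def brhX_def cnj2_def brh_def br_def uhat_def divide_inverse algebra_simps)
  ultimately show ?thesis by (simp add: phi_eq_Phi)
qed

lemma burns_laplacian_phi: "u \<noteq> 0 \<Longrightarrow> burns_laplacian N (phi N l lt) u = 0"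
  by (rule burns_laplacian_profile[OF has_derivative_Phi has_derivative_Phi_P has_derivative_Phi_M
        Phi_pde phi_eq_Phi_doubled refl])


section \<open>The power series of Phi\<close>

text \<open>Grouping the double series of Phi by total degree 2j + n produces the polynomials
  fibpoly k z c, which satisfy the Fibonacci recurrence.  At z = m1 + m2, c = - m1 m2 they are the
  complete homogeneous polynomials hsym k m1 m2, whose exponential generating function is explicit.\<close>

definition fibpoly :: "nat \<Rightarrow> complex \<Rightarrow> complex \<Rightarrow> complex" where
  "fibpoly k z c = (\<Sum>j\<le>k. of_nat ((k - j) choose j) * c^j * z^(k - 2 * j))"

definition hsym :: "nat \<Rightarrow> complex \<Rightarrow> complex \<Rightarrow> complex" where
  "hsym k m1 m2 = (\<Sum>a\<le>k. m1^a * m2^(k - a))"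

lemma fibpoly_Suc_Suc: "fibpoly (Suc (Suc k)) z c = z * fibpoly (Suc k) z c + c * fibpoly k z c"
proof -
  have lhs: "fibpoly (Suc (Suc k)) z c = z^(k + 2)
      + (\<Sum>i\<le>k. of_nat ((k + 1 - i) choose (i + 1)) * c^(i + 1) * z^(k - 2 * i))"
    unfolding fibpoly_def by (subst sum.atMost_Suc_shift, subst sum.atMost_Suc) (simp add: Suc_diff_le algebra_simps)
  have "z * fibpoly (Suc k) z c
      = z^(k + 2) + (\<Sum>i\<le>k. z * (of_nat ((k - i) choose (i + 1)) * c^(i + 1) * z^(k - 1 - 2 * i)))"
    unfolding fibpoly_def by (subst sum.atMost_Suc_shift) (simp add: sum_distrib_left distrib_left)
  also have "(\<Sum>i\<le>k. z * (of_nat ((k - i) choose (i + 1)) * c^(i + 1) * z^(k - 1 - 2 * i)))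
      = (\<Sum>i\<le>k. of_nat ((k - i) choose (i + 1)) * c^(i + 1) * z^(k - 2 * i))"
  proof (rule sum.cong[OF refl])
    fix i
    show "z * (of_nat ((k - i) choose (i + 1)) * c^(i + 1) * z^(k - 1 - 2 * i))
        = of_nat ((k - i) choose (i + 1)) * c^(i + 1) * z^(k - 2 * i)"
    proof (cases "2 * i + 1 \<le> k")
      case True
      then have "k - 2 * i = Suc (k - 1 - 2 * i)" by simp
      then show ?thesis by (simp add: algebra_simps)
    next
      case False
      then have "(k - i) choose (i + 1) = 0" by simp
      then show ?thesis by simp
    qed
  qed
  finally have z_fibpoly: "z * fibpoly (Suc k) z c
      = z^(k + 2) + (\<Sum>i\<le>k. of_nat ((k - i) choose (i + 1)) * c^(i + 1) * z^(k - 2 * i))" .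
  have c_fibpoly: "c * fibpoly k z c = (\<Sum>i\<le>k. of_nat ((k - i) choose i) * c^(i + 1) * z^(k - 2 * i))"
    unfolding fibpoly_def by (simp add: sum_distrib_left algebra_simps)
  have "of_nat ((k + 1 - i) choose (i + 1)) = (of_nat ((k - i) choose (i + 1)) + of_nat ((k - i) choose i) :: complex)"
    if "i \<le> k" for i
    using that binomial_Suc_Suc[of "k - i" i] by (simp add: Suc_diff_le)
  then have "(\<Sum>i\<le>k. of_nat ((k + 1 - i) choose (i + 1)) * c^(i + 1) * z^(k - 2 * i))
      = (\<Sum>i\<le>k. of_nat ((k - i) choose (i + 1)) * c^(i + 1) * z^(k - 2 * i))
        + (\<Sum>i\<le>k. of_nat ((k - i) choose i) * c^(i + 1) * z^(k - 2 * i))"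
    by (simp add: sum.distrib[symmetric] distrib_right)
  then show ?thesis unfolding lhs z_fibpoly c_fibpoly by simp
qed

lemma hsym_Suc: "hsym (Suc k) m1 m2 = m1^Suc k + m2 * hsym k m1 m2"
  unfolding hsym_def by (simp add: sum_distrib_left Suc_diff_le algebra_simps)

lemma hsym_commute: "hsym k m2 m1 = hsym k m1 m2"
  unfolding hsym_def by (rule sum.reindex_bij_witness[of _ "\<lambda>a. k - a" "\<lambda>a. k - a"]) auto

lemma hsym_Suc': "hsym (Suc k) m1 m2 = m2^Suc k + m1 * hsym k m1 m2"
  using hsym_Suc[of k m2 m1] by (simp add: hsym_commute)

lemma fibpoly_eq_hsym: "fibpoly k (m1 + m2) (- (m1 * m2)) = hsym k m1 m2"
proof (induction k rule: induct_nat_012)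
  case (ge2 k)
  have "hsym (Suc (Suc k)) m1 m2 = (m1 + m2) * hsym (Suc k) m1 m2 - m1 * m2 * hsym k m1 m2"
    using hsym_Suc[of "Suc k" m1 m2] hsym_Suc[of k m1 m2] hsym_Suc'[of k m1 m2] by (simp add: algebra_simps)
  with ge2 show ?case by (simp add: fibpoly_Suc_Suc)
qed (simp_all add: fibpoly_def hsym_def)

lemma hsym_diff_mult: "(m1 - m2) * hsym k m1 m2 = m1^Suc k - m2^Suc k"
  using hsym_Suc[of k m1 m2] hsym_Suc'[of k m1 m2] by (simp add: algebra_simps)

lemma hsym_diag: "hsym k m m = of_nat (Suc k) * m^k"
  unfolding hsym_def by (simp add: power_add[symmetric])

lemma fibpoly_0_right: "fibpoly k z 0 = z^k"
proof -
  have "fibpoly k z 0 = (\<Sum>j\<in>{0}. of_nat ((k - j) choose j) * 0^j * z^(k - 2 * j))"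
    unfolding fibpoly_def by (rule sum.mono_neutral_right) auto
  then show ?thesis by simp
qed

lemma sums_exp: "(\<lambda>k. x^k / fact k) sums exp (x::complex)"
  using exp_converges[of x] by (simp add: divide_inverse scaleR_conv_of_real mult.commute)

lemma sums_hsym_diag: "(\<lambda>k. hsym k m m / fact k) sums (exp m * (1 + m))"
proof -
  have "m * (m^k / fact k) = of_nat (Suc k) * m^Suc k / fact (Suc k)" for k
    using of_nat_neq_0[of k, where 'a = complex] by (simp add: field_simps del: of_nat_Suc)
  with sums_mult[OF sums_exp, of m m] have "(\<lambda>k. of_nat (Suc k) * m^Suc k / fact (Suc k)) sums (m * exp m)"
    by simp
  then have "(\<lambda>k. of_nat k * m^k / fact k) sums (m * exp m)"
    using sums_Suc_iff[of "\<lambda>k. of_nat k * m^k / fact k"] by simp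
  from sums_add[OF sums_exp this] show ?thesis
    by (simp add: hsym_diag algebra_simps add_divide_distrib)
qed

lemma sums_hsym_div_fact:
  assumes "m1 \<noteq> m2"
  shows "(\<lambda>k. hsym k m1 m2 / fact k) sums ((m1 * exp m1 - m2 * exp m2) / (m1 - m2))"
proof -
  have "hsym k m1 m2 / fact k = (m1 * (m1^k / fact k) - m2 * (m2^k / fact k)) / (m1 - m2)" for k
  proof -
    have "hsym k m1 m2 = (m1^Suc k - m2^Suc k) / (m1 - m2)"
      using hsym_diff_mult[of m1 m2 k] assms by (simp add: field_simps)
    then show ?thesis by (simp add: field_simps)
  qed
  then show ?thesis
    using sums_divide[OF sums_diff[OF sums_mult[OF sums_exp] sums_mult[OF sums_exp]], of m1 m1 m2 m2 "m1 - m2"]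
    by simp
qed

lemma sums_fibpoly_Phi: "(\<lambda>k. fibpoly k (\<i> * P) (- M) / fact k) sums Phi (P, M)"
proof -
  define Q where "Q = Qpm (P, M)"
  define s where "s = csqrt Q"
  have s2: "s^2 = Q" unfolding s_def by simp
  define m1 where "m1 = \<i> * P / 2 + \<i> * s"
  define m2 where "m2 = \<i> * P / 2 - \<i> * s"
  have sum: "m1 + m2 = \<i> * P" unfolding m1_def m2_def by simp
  have prod: "m1 * m2 = M"
  proof -
    have "m1 * m2 = - (P^2) / 4 + s^2" unfolding m1_def m2_def by (simp add: algebra_simps power2_eq_square)
    also have "\<dots> = M" unfolding s2 Q_def Qpm_def by simp
    finally show ?thesis .
  qed
  have GH: "fibpoly k (\<i> * P) (- M) = hsym k m1 m2" for k
    using fibpoly_eq_hsym[of k m1 m2] unfolding sum prod .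
  have CS: "Cser Q = cos s" "s * Sser Q = sin s" using Cser_square[of s] Sser_square[of s] unfolding s2 by simp_all
  have PhiQ: "Phi (P, M) = exp (\<i> * P / 2) * (Cser Q + \<i> * P / 2 * Sser Q)"
    unfolding Phi_def Qpm_def Q_def by simp
  show ?thesis
  proof (cases "s = 0")
    case True
    then have Q0: "Q = 0" using s2 by simp
    from True have m: "m1 = \<i> * P / 2" "m2 = \<i> * P / 2" unfolding m1_def m2_def by simp_all
    show ?thesis
      using sums_hsym_diag[of "\<i> * P / 2"] unfolding GH PhiQ Q0 Sser_0 Cser_0 m by simp
  next
    case False
    then have "m1 \<noteq> m2" unfolding m1_def m2_def by simp
    note sums = sums_hsym_div_fact[OF this]
    have e1: "exp m1 = exp (\<i> * P / 2) * (cos s + \<i> * sin s)"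
      unfolding m1_def exp_add exp_Euler ..
    have e2: "exp m2 = exp (\<i> * P / 2) * (cos s - \<i> * sin s)"
      unfolding m2_def diff_conv_add_uminus exp_add exp_minus_Euler ..
    have Sq: "Sser Q = sin s / s" using CS(2) False by (simp add: field_simps)
    have "(m1 * exp m1 - m2 * exp m2) / (m1 - m2) = Phi (P, M)"
      unfolding PhiQ e1 e2 Sq CS(1) using False unfolding m1_def m2_def
      by (simp add: field_simps)
    with sums show ?thesis unfolding GH by simp
  qed
qed

section \<open>The triple series of phi\<close>

lemma has_sum_group_fibres:
  fixes f :: "'a \<Rightarrow> 'c :: {topological_comm_monoid_add, t3_space}" and h :: "'a \<Rightarrow> 'b"
  assumes "(f has_sum S) UNIV" and "\<And>b. finite {a. h a = b}"
  shows "((\<lambda>b. sum f {a. h a = b}) has_sum S) UNIV"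
proof -
  have "bij_betw (\<lambda>a. (h a, a)) UNIV (Sigma UNIV (\<lambda>b. {a. h a = b}))"
    by (rule bij_betwI[where g = snd]) auto
  from has_sum_reindex_bij_betw[OF this, of "\<lambda>(b, a). f a" S] assms(1)
  have "((\<lambda>(b, a). f a) has_sum S) (Sigma UNIV (\<lambda>b. {a. h a = b}))" by simp
  then show ?thesis by (rule has_sum_SigmaD) (auto intro: has_sum_finiteI assms(2))
qed

lemma exp_ge_partial_sum:
  assumes "a \<ge> 0"
  shows "(\<Sum>j\<le>n. a^j / fact j) \<le> exp (a::real)"
proof -
  have "(\<lambda>j. a^j / fact j) sums exp a"
    using exp_converges[of a] by (simp add: divide_inverse mult.commute)
  moreover from this assms have "(\<Sum>j\<le>n. a^j / fact j) \<le> suminf (\<lambda>j. a^j / fact j)"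
    by (intro sum_le_suminf sums_summable) auto
  ultimately show ?thesis by (simp add: sums_iff)
qed

text \<open>tri_term c A B (j, p, q) is the general term of phi with c = - M, A = i l1 [u lt] and
  B = i l2 [uhat lt]; summing over p + q = n gives bi_term c (A + B) (j, n), over 2 j + n = k the
  k-th term of the series of Phi, and over (j + p, j + q) = (k, m) the phikl-terms.\<close>

definition tri_term :: "complex \<Rightarrow> complex \<Rightarrow> complex \<Rightarrow> nat \<times> nat \<times> nat \<Rightarrow> complex" where
  "tri_term c A B = (\<lambda>(j, p, q). c^j * A^p * B^q * fact (j + p + q) / (fact j * fact p * fact q * fact (2 * j + p + q)))"

definition bi_term :: "complex \<Rightarrow> complex \<Rightarrow> nat \<times> nat \<Rightarrow> complex" where
  "bi_term c z = (\<lambda>(j, n). c^j * z^n * fact (j + n) / (fact j * fact n * fact (2 * j + n)))"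

lemma norm_tri_term_le:
  "norm (tri_term c A B (j, p, q)) \<le> norm c ^ j / fact j * (norm A ^ p / fact p) * (norm B ^ q / fact q)"
proof -
  have "(fact (j + p + q) :: real) \<le> fact (2 * j + p + q)" by (intro fact_mono) simp
  then have "norm c ^ j * norm A ^ p * norm B ^ q * fact (j + p + q) / (fact j * fact p * fact q * fact (2 * j + p + q))
      \<le> norm c ^ j * norm A ^ p * norm B ^ q * fact (2 * j + p + q) / (fact j * fact p * fact q * fact (2 * j + p + q))"
    by (intro divide_right_mono mult_left_mono) auto
  then show ?thesis
    unfolding tri_term_def by (simp add: norm_mult norm_divide norm_power norm_fact)
qed

lemma tri_term_summable: "tri_term c A B summable_on UNIV"
proof -
  let ?a = "norm c" and ?b = "norm A" and ?d = "norm B"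
  have "(\<Sum>x\<in>F. norm (tri_term c A B x)) \<le> exp ?a * (exp ?b * exp ?d)" if "finite F" for F
  proof -
    define n where "n = (\<Sum>x\<in>F. fst x + fst (snd x) + snd (snd x))"
    have "F \<subseteq> {..n} \<times> {..n} \<times> {..n}"
    proof
      fix x assume "x \<in> F"
      with \<open>finite F\<close> have "fst x + fst (snd x) + snd (snd x) \<le> n"
        unfolding n_def by (intro member_le_sum) auto
      then show "x \<in> {..n} \<times> {..n} \<times> {..n}" by (cases x) auto
    qed
    define g where "g = (\<lambda>(j, p, q). ?a^j / fact j * (?b^p / fact p) * (?d^q / fact q))"
    have "norm (tri_term c A B x) \<le> g x" for x
      by (cases x) (simp only: g_def prod.case norm_tri_term_le)
    then have "(\<Sum>x\<in>F. norm (tri_term c A B x)) \<le> (\<Sum>x\<in>{..n} \<times> {..n} \<times> {..n}. g x)"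
      using \<open>F \<subseteq> _\<close> by (intro order.trans[OF sum_mono sum_mono2]) (auto simp: g_def split: prod.splits)
    also have "\<dots> = (\<Sum>j\<le>n. ?a^j / fact j) * ((\<Sum>p\<le>n. ?b^p / fact p) * (\<Sum>q\<le>n. ?d^q / fact q))"
      by (simp add: g_def sum_product sum.cartesian_product case_prod_beta mult.assoc)
    also have "\<dots> \<le> exp ?a * (exp ?b * exp ?d)"
      by (intro mult_mono exp_ge_partial_sum sum_nonneg mult_nonneg_nonneg) auto
    finally show ?thesis .
  qed
  then have "bdd_above (sum (\<lambda>x. norm (tri_term c A B x)) ` {F. F \<subseteq> UNIV \<and> finite F})"
    by (intro bdd_aboveI2) auto
  then show ?thesis
    by (simp add: abs_summable_iff_bdd_above summable_on_iff_abs_summable_on_complex)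
qed

lemma fibre_tri_to_bi:
  "{a :: nat \<times> nat \<times> nat. (fst a, fst (snd a) + snd (snd a)) = (j, n)} = (\<lambda>p. (j, p, n - p)) ` {..n}"
  by (auto simp: image_iff)

lemma fibre_bi_to_deg: "{a :: nat \<times> nat. 2 * fst a + snd a = k} = (\<lambda>j. (j, k - 2 * j)) ` {..k div 2}"
  by (auto simp: image_iff)

lemma fibre_tri_to_kl:
  "{a :: nat \<times> nat \<times> nat. (fst a + fst (snd a), fst a + snd (snd a)) = (k, m)}
   = (\<lambda>j. (j, k - j, m - j)) ` {..min k m}"
  by (auto simp: image_iff)

lemma finite_fibres:
  "finite {a :: nat \<times> nat \<times> nat. (fst a, fst (snd a) + snd (snd a)) = b}"
  "finite {a :: nat \<times> nat. 2 * fst a + snd a = k}"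
  "finite {a :: nat \<times> nat \<times> nat. (fst a + fst (snd a), fst a + snd (snd a)) = b}"
  using fibre_tri_to_bi[of "fst b" "snd b"] fibre_bi_to_deg[of k] fibre_tri_to_kl[of "fst b" "snd b"] by auto

lemma sum_fibre_tri_to_bi:
  "sum (tri_term c A B) {a. (fst a, fst (snd a) + snd (snd a)) = (j, n)} = bi_term c (A + B) (j, n)"
proof -
  let ?K = "c^j * fact (j + n) / (fact j * fact (2 * j + n)) / fact n"
  have "inj_on (\<lambda>p. (j, p, n - p)) {..n}" by (auto simp: inj_on_def)
  then have "sum (tri_term c A B) {a. (fst a, fst (snd a) + snd (snd a)) = (j, n)}
      = (\<Sum>p\<le>n. ?K * (of_nat (n choose p) * A^p * B^(n - p)))"
    unfolding fibre_tri_to_bi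
  proof (rule sum.reindex_cong[OF _ refl])
    fix p assume "p \<in> {..n}"
    then have "p \<le> n" by simp
    then show "tri_term c A B (j, p, n - p) = ?K * (of_nat (n choose p) * A^p * B^(n - p))"
      unfolding tri_term_def binomial_fact[OF \<open>p \<le> n\<close>] by (simp add: field_simps)
  qed
  also have "\<dots> = bi_term c (A + B) (j, n)"
    unfolding sum_distrib_left[symmetric] binomial_ring[symmetric] bi_term_def by (simp add: field_simps)
  finally show ?thesis .
qed

lemma sum_fibre_bi_to_deg: "sum (bi_term c z) {a. 2 * fst a + snd a = k} = fibpoly k z c / fact k"
proof -
  have "inj_on (\<lambda>j. (j, k - 2 * j)) {..k div 2}" by (auto simp: inj_on_def)
  then have "sum (bi_term c z) {a. 2 * fst a + snd a = k}
      = (\<Sum>j\<le>k div 2. of_nat ((k - j) choose j) * c^j * z^(k - 2 * j) / fact k)"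
    unfolding fibre_bi_to_deg
  proof (rule sum.reindex_cong[OF _ refl])
    fix j assume "j \<in> {..k div 2}"
    then have "2 * j \<le> k" by auto
    then have "j \<le> k - j" and "k - j - j = k - 2 * j" by simp_all
    from binomial_fact[OF this(1)] this(2)
    have "of_nat ((k - j) choose j) = (fact (k - j) / (fact j * fact (k - 2 * j)) :: complex)" by simp
    with \<open>2 * j \<le> k\<close> show "bi_term c z (j, k - 2 * j) = of_nat ((k - j) choose j) * c^j * z^(k - 2 * j) / fact k"
      unfolding bi_term_def by (simp add: field_simps)
  qed
  also have "\<dots> = fibpoly k z c / fact k"
  proof -
    have "(\<Sum>j\<le>k. of_nat ((k - j) choose j) * c^j * z^(k - 2 * j))
        = (\<Sum>j\<le>k div 2. of_nat ((k - j) choose j) * c^j * z^(k - 2 * j))"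
      by (rule sum.mono_neutral_right) auto
    then show ?thesis unfolding fibpoly_def by (simp add: sum_divide_distrib)
  qed
  finally show ?thesis .
qed

lemma sum_fibre_tri_to_kl:
  "sum (tri_term c A B) {a. (fst a + fst (snd a), fst a + snd (snd a)) = (k, m)}
   = (\<Sum>j\<le>min k m. tri_term c A B (j, k - j, m - j))"
proof -
  have "inj_on (\<lambda>j. (j, k - j, m - j)) {..min k m}" by (auto simp: inj_on_def)
  then show ?thesis unfolding fibre_tri_to_kl by (simp add: sum.reindex)
qed

lemma has_sum_tri_term:
  assumes "\<i> * P = A + B"
  shows "(tri_term (- M) A B has_sum Phi (P, M)) UNIV" and "(bi_term (- M) (A + B) has_sum Phi (P, M)) UNIV"
proof -
  obtain I where tri: "(tri_term (- M) A B has_sum I) UNIV"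
    using tri_term_summable has_sum_infsum by blast
  have "(\<lambda>b. sum (tri_term (- M) A B) {a. (fst a, fst (snd a) + snd (snd a)) = b}) = bi_term (- M) (A + B)"
    using sum_fibre_tri_to_bi[of "- M" A B] by (simp add: fun_eq_iff split_paired_all)
  with has_sum_group_fibres[OF tri finite_fibres(1)] have bi: "(bi_term (- M) (A + B) has_sum I) UNIV"
    by simp
  from has_sum_group_fibres[OF bi finite_fibres(2)]
  have "(\<lambda>k. fibpoly k (A + B) (- M) / fact k) sums I"
    unfolding sum_fibre_bi_to_deg by (rule has_sum_imp_sums)
  with sums_fibpoly_Phi[of P M] have "I = Phi (P, M)"
    unfolding assms by (simp add: sums_iff)
  with tri bi show "(tri_term (- M) A B has_sum Phi (P, M)) UNIV" "(bi_term (- M) (A + B) has_sum Phi (P, M)) UNIV"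
    by simp_all
qed

lemma tri_terms_phikl:
  assumes "A = \<i> * l1 * a" and "B = \<i> * l2 * b" and "c = A * B * x"
  shows "(\<i> * l1)^k * (\<i> * l2)^m / (fact k * fact m) * (fact k * fact m / fact (k + m)
       * (\<Sum>j=0..min k m. fact (k + m - j) / (fact j * fact (k - j) * fact (m - j)) * x^j * a^k * b^m))
    = (\<Sum>j\<le>min k m. tri_term c A B (j, k - j, m - j))"
  unfolding sum_distrib_left atLeast0AtMost
proof (rule sum.cong[OF refl])
  fix j assume "j \<in> {..min k m}"
  then have "j \<le> k" and "j \<le> m" by auto
  then have "A^k = A^j * A^(k - j)" and "B^m = B^j * B^(m - j)"
    by (simp_all flip: power_add)
  then have "c^j * A^(k - j) * B^(m - j) = x^j * A^k * B^m"
    unfolding assms(3) by (simp add: power_mult_distrib algebra_simps)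
  also have "\<dots> = x^j * ((\<i> * l1)^k * a^k) * ((\<i> * l2)^m * b^m)"
    unfolding assms(1,2) by (simp add: power_mult_distrib)
  finally have "c^j * A^(k - j) * B^(m - j) = x^j * ((\<i> * l1)^k * a^k) * ((\<i> * l2)^m * b^m)" .
  moreover have "j + (k - j) + (m - j) = k + m - j" and "2 * j + (k - j) + (m - j) = k + m"
    using \<open>j \<le> k\<close> \<open>j \<le> m\<close> by simp_all
  ultimately show "(\<i> * l1)^k * (\<i> * l2)^m / (fact k * fact m) * (fact k * fact m / fact (k + m)
      * (fact (k + m - j) / (fact j * fact (k - j) * fact (m - j)) * x^j * a^k * b^m))
    = tri_term c A B (j, k - j, m - j)"
    unfolding tri_term_def by (simp add: field_simps)
qed

lemma has_sum_phi_tri_term: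
  "(tri_term (- cross_term N l lt u) (\<i> * fst l * br u lt) (\<i> * snd l * brh u lt) has_sum phi N l lt u) UNIV"
  "(bi_term (- cross_term N l lt u) (\<i> * pdx l lt u) has_sum phi N l lt u) UNIV"
proof -
  have "\<i> * pdx l lt u = \<i> * fst l * br u lt + \<i> * snd l * brh u lt"
    unfolding pdx_def by (simp add: algebra_simps)
  from has_sum_tri_term[OF this] show
    "(tri_term (- cross_term N l lt u) (\<i> * fst l * br u lt) (\<i> * snd l * brh u lt) has_sum phi N l lt u) UNIV"
    "(bi_term (- cross_term N l lt u) (\<i> * pdx l lt u) has_sum phi N l lt u) UNIV"
    unfolding phi_eq_Phi by (simp_all add: \<open>\<i> * pdx l lt u = _\<close>)
qed

lemma has_sum_phikl_phi:
  "((\<lambda>(k, m). (\<i> * fst l)^k * (\<i> * snd l)^m / (fact k * fact m) * phikl N lt k m u) has_sum phi N l lt u) UNIV"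
proof -
  have c: "- cross_term N l lt u = \<i> * fst l * br u lt * (\<i> * snd l * brh u lt) * of_real (N / normsq u)"
    unfolding cross_term_def by (simp add: field_simps)
  have "((\<lambda>b. sum (tri_term (- cross_term N l lt u) (\<i> * fst l * br u lt) (\<i> * snd l * brh u lt))
      {a. (fst a + fst (snd a), fst a + snd (snd a)) = b}) has_sum phi N l lt u) UNIV"
    by (rule has_sum_group_fibres[OF has_sum_phi_tri_term(1) finite_fibres(3)])
  also have "(\<lambda>b. sum (tri_term (- cross_term N l lt u) (\<i> * fst l * br u lt) (\<i> * snd l * brh u lt))
      {a. (fst a + fst (snd a), fst a + snd (snd a)) = b})
    = (\<lambda>(k, m). (\<i> * fst l)^k * (\<i> * snd l)^m / (fact k * fact m) * phikl N lt k m u)"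
  proof
    fix b :: "nat \<times> nat"
    obtain k m where b: "b = (k, m)" by (cases b)
    show "sum (tri_term (- cross_term N l lt u) (\<i> * fst l * br u lt) (\<i> * snd l * brh u lt))
        {a. (fst a + fst (snd a), fst a + snd (snd a)) = b}
      = (\<lambda>(k, m). (\<i> * fst l)^k * (\<i> * snd l)^m / (fact k * fact m) * phikl N lt k m u) b"
      unfolding b sum_fibre_tri_to_kl prod.case phikl_def by (rule tri_terms_phikl[symmetric, OF refl refl c])
  qed
  finally show ?thesis .
qed

lemma pochhammer_Suc_of_nat: "pochhammer (of_nat (Suc j) :: complex) n = fact (j + n) / fact j"
proof -
  have "(fact (j + n) :: complex) = pochhammer 1 (j + n)" by (simp add: pochhammer_fact)
  also have "\<dots> = pochhammer 1 j * pochhammer (1 + of_nat j) n" by (rule pochhammer_product')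
  also have "\<dots> = fact j * pochhammer (of_nat (Suc j)) n" by (simp add: pochhammer_fact add.commute)
  finally show ?thesis by (simp add: field_simps)
qed

lemma hyp1F1_bi_term_row:
  assumes "(\<lambda>n. bi_term c z (j, n)) sums S"
  shows "S = c^j / fact (2 * j) * hyp1F1 (of_nat (j + 1)) (of_nat (2 * j + 1)) z"
proof -
  define K where "K = c^j / fact (2 * j)"
  define t where "t = (\<lambda>n. pochhammer (of_nat (j + 1)) n / pochhammer (of_nat (2 * j + 1)) n * z^n / fact n)"
  have bi_term: "bi_term c z (j, n) = K * t n" for n
  proof -
    have "pochhammer (of_nat (j + 1) :: complex) n = fact (j + n) / fact j"
      and "pochhammer (of_nat (2 * j + 1) :: complex) n = fact (2 * j + n) / fact (2 * j)"
      using pochhammer_Suc_of_nat[of j n] pochhammer_Suc_of_nat[of "2 * j" n] by simp_all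
    then show ?thesis unfolding bi_term_def K_def t_def by (simp add: field_simps)
  qed
  show ?thesis
  proof (cases "K = 0")
    case True
    with assms have "(\<lambda>n. 0) sums S" by (simp add: bi_term)
    then have "S = 0" by (simp add: sums_iff)
    with True show ?thesis by (simp add: K_def)
  next
    case False
    from sums_divide[OF assms, of K] have "t sums (S / K)"
      using False by (simp add: bi_term)
    then have "hyp1F1 (of_nat (j + 1)) (of_nat (2 * j + 1)) z = S / K"
      unfolding hyp1F1_def t_def by (simp add: sums_iff)
    with False show ?thesis by (simp add: K_def)
  qed
qed

lemma sums_hyp1F1_phi:
  "(\<lambda>j. 1 / fact (2 * j)
        * (- (of_real N * fst l * snd l * br u lt * brh u lt / of_real (normsq u)))^j
        * hyp1F1 (of_nat (j + 1)) (of_nat (2 * j + 1)) (\<i> * pdx l lt u))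
   sums phi N l lt u"
proof -
  define c z where "c = - cross_term N l lt u" and "z = \<i> * pdx l lt u"
  have bi: "(bi_term c z has_sum phi N l lt u) (Sigma UNIV (\<lambda>_. UNIV))"
    using has_sum_phi_tri_term(2) by (simp add: c_def z_def)
  have "((\<lambda>n. bi_term c z (j, n)) has_sum c^j / fact (2 * j) * hyp1F1 (of_nat (j + 1)) (of_nat (2 * j + 1)) z) UNIV"
    for j
  proof -
    have "(\<lambda>(j, n). bi_term c z (j, n)) summable_on Sigma UNIV (\<lambda>_. UNIV)"
      using has_sum_imp_summable[OF bi] by (simp add: case_prod_beta)
    then have "(\<lambda>n. bi_term c z (j, n)) summable_on UNIV"
      using summable_on_SigmaD1[of "\<lambda>j n. bi_term c z (j, n)"] by blast
    then have "((\<lambda>n. bi_term c z (j, n)) has_sum (\<Sum>\<^sub>\<infinity>n. bi_term c z (j, n))) UNIV"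
      by (rule has_sum_infsum)
    with hyp1F1_bi_term_row[OF has_sum_imp_sums[OF this]] show ?thesis by simp
  qed
  from has_sum_SigmaD[OF bi this] show ?thesis
    by (auto dest: has_sum_imp_sums simp: c_def z_def cross_term_def)
qed


section \<open>The case N = 0, the scaling symmetry and the limit at the origin\<close>

lemma phi_N0: "phi 0 l lt u = exp (\<i> * pdx l lt u)"
proof -
  have "(\<lambda>k. (\<i> * pdx l lt u)^k / fact k) sums Phi (pdx l lt u, 0)"
    using sums_fibpoly_Phi[of "pdx l lt u" 0] by (simp add: fibpoly_0_right)
  then have "Phi (pdx l lt u, 0) = exp (\<i> * pdx l lt u)"
    using sums_exp sums_unique2 by blast
  then show ?thesis unfolding phi_eq_Phi cross_term_def by simp
qed

lemma phi_rescale: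
  assumes "s \<noteq> 0"
  shows "phi N (s * fst l, s * snd l) (fst lt / s, snd lt / s) u = phi N l lt u"
proof -
  have br: "br u (fst lt / s, snd lt / s) = br u lt / s"
    and brh: "brh u (fst lt / s, snd lt / s) = brh u lt / s"
    unfolding brh_def br_def by (simp_all add: add_divide_distrib diff_divide_distrib)
  have "pdx (s * fst l, s * snd l) (fst lt / s, snd lt / s) u = pdx l lt u"
    unfolding pdx_def br brh using assms by (simp add: field_simps)
  moreover have "cross_term N (s * fst l, s * snd l) (fst lt / s, snd lt / s) u = cross_term N l lt u"
    unfolding cross_term_def br brh using assms by (simp add: field_simps power2_eq_square)
  ultimately show ?thesis unfolding phi_eq_Phi by simp
qed

lemma isCont_Phi: "isCont Phi z"
  using has_derivative_Phi by (rule has_derivative_continuous)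

lemma Phi_0: "Phi (0, M) = Cser M"
  unfolding Phi_def Qpm_def by simp

lemma brh_eq: "brh z lt = - cnj (snd z) * fst lt + cnj (fst z) * snd lt"
  unfolding brh_def br_def uhat_def by simp

lemma pdx_scale: "pdx l lt (t * a, t * b) = t * (fst l * br (a, b) lt) + cnj t * (snd l * brh (a, b) lt)"
  unfolding pdx_def br_def brh_def uhat_def by (simp add: algebra_simps)

lemma cross_term_scale:
  assumes "t \<noteq> 0"
  shows "cross_term N l lt (t * a, t * b) = cross_term N l lt (a, b)"
proof -
  have "br (t * a, t * b) lt = t * br (a, b) lt" and "brh (t * a, t * b) lt = cnj t * brh (a, b) lt"
    unfolding br_def brh_def uhat_def by (simp_all add: algebra_simps)
  moreover have "normsq (t * a, t * b) = (cmod t)^2 * normsq (a, b)"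
    unfolding normsq_def by (simp add: norm_mult power_mult_distrib algebra_simps)
  then have "of_real (normsq (t * a, t * b)) = t * cnj t * of_real (normsq (a, b))"
    by (simp only: of_real_mult complex_norm_square)
  moreover have "t * cnj t \<noteq> 0" using assms by simp
  ultimately show ?thesis unfolding cross_term_def by (simp add: field_simps)
qed

lemma isCont_cross_term:
  assumes "\<zeta> \<noteq> 0"
  shows "isCont (cross_term N l lt) \<zeta>"
proof -
  have "isCont (\<lambda>z. of_real N * fst l * snd l * br z lt * brh z lt) \<zeta>"
    unfolding br_def brh_def uhat_def by (intro continuous_intros)
  moreover have "isCont (\<lambda>z. of_real (normsq z) :: complex) \<zeta>"
    unfolding normsq_def by (intro continuous_intros)
  moreover have "(of_real (normsq \<zeta>) :: complex) \<noteq> 0"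
    using normsq_pos[OF assms] by simp
  ultimately show ?thesis
    unfolding cross_term_def by (rule isCont_divide)
qed

lemma tendsto_phi_blowup:
  assumes "\<zeta> \<noteq> 0"
  shows "((\<lambda>(t::complex, z). phi N l lt (t * fst z, t * snd z))
          \<longlongrightarrow> Cser (of_real N * fst l * snd l * br \<zeta> lt * brh \<zeta> lt / of_real (normsq \<zeta>)))
        (at (0, \<zeta>) within {p. fst p \<noteq> 0 \<and> snd p \<noteq> 0})"
proof -
  let ?F = "at (0::complex, \<zeta>) within {p. fst p \<noteq> 0 \<and> snd p \<noteq> 0}"
  have t: "((\<lambda>p. fst p) \<longlongrightarrow> 0) ?F" and z: "((\<lambda>p. snd p) \<longlongrightarrow> \<zeta>) ?F"
    using tendsto_fst[OF tendsto_ident_at[of "(0, \<zeta>)"]] tendsto_snd[OF tendsto_ident_at[of "(0, \<zeta>)"]]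
    by simp_all
  have "((\<lambda>p. fst p * (fst l * br (snd p) lt) + cnj (fst p) * (snd l * brh (snd p) lt))
      \<longlongrightarrow> 0 * (fst l * br \<zeta> lt) + cnj 0 * (snd l * brh \<zeta> lt)) ?F"
    unfolding br_def brh_eq by (intro tendsto_intros t tendsto_fst tendsto_snd z)
  then have "((\<lambda>p. pdx l lt (fst p * fst (snd p), fst p * snd (snd p))) \<longlongrightarrow> 0) ?F"
    by (simp add: pdx_scale)
  moreover have "((\<lambda>p. cross_term N l lt (snd p)) \<longlongrightarrow> cross_term N l lt \<zeta>) ?F"
    using isCont_tendsto_compose[OF isCont_cross_term[OF assms] z] .
  ultimately have "((\<lambda>p. Phi (pdx l lt (fst p * fst (snd p), fst p * snd (snd p)), cross_term N l lt (snd p)))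
      \<longlongrightarrow> Phi (0, cross_term N l lt \<zeta>)) ?F"
    by (intro isCont_tendsto_compose[OF isCont_Phi] tendsto_Pair)
  moreover have "\<forall>\<^sub>F p in ?F. Phi (pdx l lt (fst p * fst (snd p), fst p * snd (snd p)), cross_term N l lt (snd p))
      = (\<lambda>(t, z). phi N l lt (t * fst z, t * snd z)) p"
    by (auto simp: eventually_at_filter phi_eq_Phi cross_term_scale split: prod.splits)
  ultimately show ?thesis
    unfolding Phi_0 cross_term_def by (rule Lim_transform_eventually)
qed

lemma tendsto_phi_ray:
  assumes "\<zeta> \<noteq> 0"
  shows "((\<lambda>t::complex. phi N l lt (t * fst \<zeta>, t * snd \<zeta>))
          \<longlongrightarrow> Cser (of_real N * fst l * snd l * br \<zeta> lt * brh \<zeta> lt / of_real (normsq \<zeta>))) (at 0)"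
proof -
  have "((\<lambda>t::complex. (t, \<zeta>)) \<longlongrightarrow> (0, \<zeta>)) (at 0)"
    by (intro tendsto_Pair tendsto_ident_at tendsto_const)
  moreover have "\<forall>\<^sub>F t in at (0::complex). (t, \<zeta>) \<in> {p. fst p \<noteq> 0 \<and> snd p \<noteq> 0} \<and> (t, \<zeta>) \<noteq> (0, \<zeta>)"
    using assms by (simp add: eventually_at_filter)
  ultimately have "filterlim (\<lambda>t::complex. (t, \<zeta>)) (at (0, \<zeta>) within {p. fst p \<noteq> 0 \<and> snd p \<noteq> 0}) (at 0)"
    unfolding filterlim_at by blast
  from filterlim_compose[OF tendsto_phi_blowup[OF assms] this] show ?thesis
    by (simp only: split_conv)
qed

theorem mainTheorem6:
  fixes N :: real and l lt :: "complex \<times> complex"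
  assumes "N > 0"
  shows
   "(\<forall>u. u \<noteq> 0 \<longrightarrow> burns_laplacian N (phi N l lt) u = 0)
  \<and> (\<forall>u. u \<noteq> 0 \<longrightarrow>
       ((\<lambda>(k, m). (\<i> * fst l)^k * (\<i> * snd l)^m / (fact k * fact m) * phikl N lt k m u)
          has_sum phi N l lt u) UNIV)
  \<and> (\<forall>u. u \<noteq> 0 \<longrightarrow>
       (\<lambda>j. 1 / fact (2 * j)
             * (- (of_real N * fst l * snd l * br u lt * brh u lt / of_real (normsq u)))^j
             * hyp1F1 (of_nat (j + 1)) (of_nat (2 * j + 1)) (\<i> * pdx l lt u))
        sums phi N l lt u)
  \<and> (\<forall>u. u \<noteq> 0 \<longrightarrow> phi 0 l lt u = exp (\<i> * pdx l lt u))
  \<and> (\<forall>\<zeta>. \<zeta> \<noteq> 0 \<longrightarrow>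
       ((\<lambda>t::complex. phi N l lt (t * fst \<zeta>, t * snd \<zeta>))
          \<longlongrightarrow> Cser (of_real N * fst l * snd l * br \<zeta> lt * brh \<zeta> lt / of_real (normsq \<zeta>))) (at 0))
  \<and> (\<forall>\<zeta>. \<zeta> \<noteq> 0 \<longrightarrow>
       ((\<lambda>(t::complex, z). phi N l lt (t * fst z, t * snd z))
          \<longlongrightarrow> Cser (of_real N * fst l * snd l * br \<zeta> lt * brh \<zeta> lt / of_real (normsq \<zeta>)))
        (at (0, \<zeta>) within {p. fst p \<noteq> 0 \<and> snd p \<noteq> 0}))
  \<and> (\<forall>s u. s \<noteq> 0 \<longrightarrow> u \<noteq> 0 \<longrightarrow>
       phi N (s * fst l, s * snd l) (fst lt / s, snd lt / s) u = phi N l lt u)"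
  by (intro conjI allI impI burns_laplacian_phi has_sum_phikl_phi sums_hyp1F1_phi phi_N0
      tendsto_phi_ray tendsto_phi_blowup phi_rescale)

end
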